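(* The function $\mathcal{R}(t,D_1,D_2)$ is jointly multiplicative in $t,D_1,D_2$: for all integers $t$ and positive integers $C_1,C_2,E_1,E_2$ with $\gcd(C_1C_2,E_1E_2)=1$, \[ \mathcal{R}(t,C_1E_1,C_2E_2)=\mathcal{R}(t,C_1,C_2)\,\mathcal{R}(t,E_1,E_2). \]
   Context: Notation: $e(x)=e^{2\pi ix}$. For integers $m_1,m_2,n_1,n_2$ and positive integers $D_1,D_2$, the $GL_3$ Kloosterman sum is \[ S(m_1,m_2,n_1,n_2;D_1,D_2)=\sum e\Big(\frac{m_1B_1+n_1(Y_1D_2-Z_1B_2)}{D_1}\Big)e\Big(\frac{m_2B_2+n_2(Y_2D_1-Z_2B_1)}{D_2}\Big), \] the sum over $B_1,C_1 \bmod D_1$, $B_2,C_2\bmod D_2$ with $\gcd(B_1,C_1,D_1)=\gcd(B_2,C_2,D_2)=1$ and $D_1C_2+B_1B_2+C_1D_2\equiv 0\pmod{D_1D_2}$, where $Y_1B_1+Z_1C_1\equiv 1\pmod{D_1}$, $Y_2B_2+Z_2C_2\equiv1\pmod{D_2}$ (independent of choices). For integers $a,b$ with $(a,D_1)=(b,D_2)=1$ and integers $u,t$, define \[ \widehat S(a,u,t,b;D_1,D_2)=\frac{1}{D_1D_2}\sum_{x\bmod D_1}\sum_{y\bmod D_2}S(a,y,x,b;D_1,D_2)\,e\Big(\frac{-xt}{D_1}\Big)e\Big(\frac{-yu}{D_2}\Big), \] and \[ \mathcal{R}(t,D_1,D_2)=\max_{(ab,D_1)=1}\ \sum_{u\bmod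 D_2}\big|\widehat S(a,u,bt,1;D_1,D_2)\big|, \] the maximum over integers $a,b$ coprime to $D_1$. *)

theory Defs
  imports "HOL-Analysis.Analysis" "HOL-Number_Theory.Cong"
begin

definition ee :: "real \<Rightarrow> complex" where
  "ee x = cis (2 * pi * x)"

text \<open>GL(3) Kloosterman sum S(m1,m2,n1,n2;D1,D2). Residues mod D are represented by
  {0..<D}; Y1,Z1 (resp. Y2,Z2) are some solution of Y1 B1 + Z1 C1 = 1 mod D1
  (the sum is independent of the choice).\<close>
definition kl3 :: "int \<Rightarrow> int \<Rightarrow> int \<Rightarrow> int \<Rightarrow> int \<Rightarrow> int \<Rightarrow> complex" where
  "kl3 m1 m2 n1 n2 D1 D2 =
    (\<Sum>(B1, C1, B2, C2) \<in> {(B1, C1, B2, C2). B1 \<in> {0..<D1} \<and> C1 \<in> {0..<D1} \<and>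
         B2 \<in> {0..<D2} \<and> C2 \<in> {0..<D2} \<and>
         gcd (gcd B1 C1) D1 = 1 \<and> gcd (gcd B2 C2) D2 = 1 \<and>
         [D1 * C2 + B1 * B2 + C1 * D2 = 0] (mod (D1 * D2))}.
       (let (Y1, Z1) = (SOME (Y, Z). [Y * B1 + Z * C1 = 1] (mod D1));
            (Y2, Z2) = (SOME (Y, Z). [Y * B2 + Z * C2 = 1] (mod D2))
        in ee (of_int (m1 * B1 + n1 * (Y1 * D2 - Z1 * B2)) / of_int D1) *
           ee (of_int (m2 * B2 + n2 * (Y2 * D1 - Z2 * B1)) / of_int D2)))"

definition kl3_hat :: "int \<Rightarrow> int \<Rightarrow> int \<Rightarrow> int \<Rightarrow> int \<Rightarrow> int \<Rightarrow> complex" where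
  "kl3_hat a u t b D1 D2 =
    (1 / of_int (D1 * D2)) *
    (\<Sum>x \<in> {0..<D1}. \<Sum>y \<in> {0..<D2}.
       kl3 a y x b D1 D2 * ee (of_int (- x * t) / of_int D1) * ee (of_int (- y * u) / of_int D2))"

text \<open>R(t,D1,D2): maximum over all integers a, b with gcd(ab, D1) = 1
  (the set of values is finite, so the supremum is the maximum).\<close>
definition calR :: "int \<Rightarrow> int \<Rightarrow> int \<Rightarrow> real" where
  "calR t D1 D2 =
    Sup ((\<lambda>(a, b). \<Sum>u \<in> {0..<D2}. cmod (kl3_hat a u (b * t) 1 D1 D2))
          ` {(a, b). coprime (a * b) D1})"

end

theory Submission
  imports Defs "HOL-Computational_Algebra.Primes"
begin

text \<open>Fourier inversion in \<open>x\<close> and \<open>y\<close> identifies \<open>S-hat(a, u, t, 1; D1, D2)\<close> with the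
  Kloosterman sum restricted to the indices with \<open>B2 = u (mod D2)\<close> and \<open>Y1 D2 - Z1 B2 = t (mod D1)\<close>;
  thus \<open>\<R>(t, D1, D2)\<close> is the largest l1-norm in \<open>u\<close> of such restricted sums.
  For \<open>D1 = C1 E1\<close>, \<open>D2 = C2 E2\<close> with \<open>gcd(C1 C2, E1 E2) = 1\<close>, the Chinese remainder theorem,
  applied after rescaling \<open>C1\<close> and \<open>C2\<close>, splits the summation set into a product, and every
  restricted sum factors into restricted sums for \<open>(C1, C2)\<close> and \<open>(E1, E2)\<close> with twisted
  parameters. The twist of the \<open>n2\<close>-parameter is absorbed by the substitution
  \<open>(B1, C1, B2, C2) \<mapsto> (B1, \<gamma> C1, \<gamma> B2, \<gamma> C2)\<close> with a unit \<open>\<gamma>\<close>, which only permutes \<open>u\<close>;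
  the twists of \<open>a\<close> and \<open>t\<close> are units and permute the admissible pairs \<open>(a, b)\<close>.
  So the values of \<open>\<R>\<close> for \<open>(C1 E1, C2 E2)\<close> are exactly the products of values for \<open>(C1, C2)\<close>
  and for \<open>(E1, E2)\<close>, and the maxima multiply.\<close>

section \<open>The additive character\<close>

lemma ee_add: "ee (x + y) = ee x * ee y"
  by (simp add: ee_def cis_mult distrib_left)

lemma ee_of_int [simp]: "ee (of_int n) = 1"
  unfolding ee_def by (metis cis_multiple_2pi Ints_of_int)

lemma ee_eq_1_iff: "ee x = 1 \<longleftrightarrow> x \<in> \<int>"
proof
  assume "ee x = 1"
  then have "exp (\<i> * complex_of_real (2 * pi * x)) = 1" by (simp add: ee_def cis_conv_exp)
  then obtain n :: int where "2 * pi * x = of_int (2 * n) * pi" by (auto simp: exp_eq_1)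
  then show "x \<in> \<int>" by simp
qed (auto elim: Ints_cases)

lemma ee_cong:
  fixes x y D :: int
  assumes "[x = y] (mod D)"
  shows "ee (of_int x / of_int D) = ee (of_int y / of_int D)"
proof (cases "D = 0")
  case False
  obtain k where "x = y + D * k" using assms by (metis cong_iff_lin cong_sym)
  then have "of_int x / of_int D = of_int y / of_int D + (of_int k :: real)"
    using False by (simp add: field_simps)
  then show ?thesis by (simp add: ee_add)
qed (use assms in simp)

lemma ee_frac_mult: "ee (of_int p / of_int D) * ee (of_int q / of_int D)
    = ee (of_int (p + q) / of_int D)"
  by (simp add: ee_add[symmetric] add_divide_distrib)

lemma ee_frac_regroup:
  "ee (of_int (p + x * n) / of_int D1) * ee (of_int (y * q + r) / of_int D2) *
     ee (of_int (- x * t) / of_int D1) * ee (of_int (- y * u) / of_int D2) =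
   (ee (of_int p / of_int D1) * ee (of_int r / of_int D2)) *
     (ee (of_int (x * (n - t)) / of_int D1) * ee (of_int (y * (q - u)) / of_int D2))"
proof -
  have frac1: "ee (of_int (p + x * n) / of_int D1) * ee (of_int (- x * t) / of_int D1) =
      ee (of_int p / of_int D1) * ee (of_int (x * (n - t)) / of_int D1)"
    and frac2: "ee (of_int (y * q + r) / of_int D2) * ee (of_int (- y * u) / of_int D2) =
      ee (of_int r / of_int D2) * ee (of_int (y * (q - u)) / of_int D2)"
    by (simp_all only: ee_frac_mult) (simp_all add: algebra_simps)
  have "ee (of_int (p + x * n) / of_int D1) * ee (of_int (y * q + r) / of_int D2) *
      ee (of_int (- x * t) / of_int D1) * ee (of_int (- y * u) / of_int D2) =
    (ee (of_int (p + x * n) / of_int D1) * ee (of_int (- x * t) / of_int D1)) *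
      (ee (of_int (y * q + r) / of_int D2) * ee (of_int (- y * u) / of_int D2))"
    by (simp only: mult_ac)
  also have "\<dots> = (ee (of_int p / of_int D1) * ee (of_int r / of_int D2)) *
      (ee (of_int (x * (n - t)) / of_int D1) * ee (of_int (y * (q - u)) / of_int D2))"
    by (simp only: frac1 frac2) (simp only: mult_ac)
  finally show ?thesis .
qed

lemma ee_sum_orthogonality:
  fixes D k :: int
  assumes "D > 0"
  shows "(\<Sum>x\<in>{0..<D}. ee (of_int (x * k) / of_int D)) = (if D dvd k then of_int D else 0)"
proof -
  define w where "w = ee (of_int k / of_int D)"
  have power: "ee (of_int (int n * k) / of_int D) = w ^ n" for n
    unfolding w_def ee_def Complex.DeMoivre by (simp add: field_simps)
  have "{0..<D} = int ` {..<nat D}" using assms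
    by (auto simp: image_def intro!: bexI[of _ "nat _"])
  then have "(\<Sum>x\<in>{0..<D}. ee (of_int (x * k) / of_int D)) =
      (\<Sum>n<nat D. ee (of_int (int n * k) / of_int D))"
    by (simp add: sum.reindex)
  also have "\<dots> = (\<Sum>n<nat D. w ^ n)" by (simp only: power)
  also have "\<dots> = (if D dvd k then of_int D else 0)"
  proof (cases "D dvd k")
    case True
    then have "w = 1" using assms by (auto simp: w_def)
    then show ?thesis using True assms by simp
  next
    case False
    have "w \<noteq> 1"
    proof
      assume "w = 1"
      then obtain n where "of_int k / of_int D = (of_int n :: real)"
        unfolding w_def ee_eq_1_iff by (auto elim: Ints_cases)
      then have "k = D * n" using assms by (simp add: field_simps flip: of_int_mult)
      then show False using False by simp
    qed
    moreover have "w ^ nat D = 1" using power[of "nat D"] assms by simp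
    ultimately show ?thesis using False by (simp add: geometric_sum)
  qed
  finally show ?thesis .
qed

lemma ee_crt_split:
  fixes p q c e x :: int
  assumes "p * e + q * c = 1" "c \<noteq> 0" "e \<noteq> 0"
  shows "ee (of_int x / of_int (c * e))
      = ee (of_int (p * x) / of_int c) * ee (of_int (q * x) / of_int e)"
proof -
  have "real_of_int x = of_int x * (of_int p * of_int e + of_int q * of_int c)"
    using arg_cong[OF assms(1), of real_of_int] by simp
  then have "of_int x / of_int (c * e)
      = of_int (p * x) / of_int c + (of_int (q * x) / of_int e :: real)"
    using assms(2,3) by (simp add: field_simps)
  then show ?thesis by (simp add: ee_add)
qed


section \<open>Congruences\<close>

lemma cong_add_mult_self: "[x + D * m = x] (mod D)"
  for x D m :: int
  by (simp add: cong_def)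

lemma gcd_eq_1_iff_bezout_cong:
  fixes a b D :: int
  shows "gcd (gcd a b) D = 1 \<longleftrightarrow> (\<exists>Y Z. [Y * a + Z * b = 1] (mod D))"
proof
  assume "gcd (gcd a b) D = 1"
  then have "coprime (gcd a b) D" by (simp add: coprime_iff_gcd_eq_1)
  then obtain x where x: "[gcd a b * x = 1] (mod D)" using cong_solve_coprime_int by blast
  obtain Y Z where YZ: "Y * a + Z * b = gcd a b" using bezout_int by blast
  have "(x * Y) * a + (x * Z) * b = (Y * a + Z * b) * x" by (simp add: algebra_simps)
  then have "[(x * Y) * a + (x * Z) * b = 1] (mod D)" using x by (simp add: YZ)
  then show "\<exists>Y Z. [Y * a + Z * b = 1] (mod D)" by blast
next
  assume "\<exists>Y Z. [Y * a + Z * b = 1] (mod D)"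
  then obtain Y Z where YZ: "D dvd Y * a + Z * b - 1" by (auto simp: cong_iff_dvd_diff)
  define g where "g = gcd (gcd a b) D"
  have "g dvd a" "g dvd b" "g dvd D" unfolding g_def by (meson dvd_trans gcd_dvd1 gcd_dvd2)+
  then have "g dvd Y * a + Z * b" "g dvd Y * a + Z * b - 1" using YZ by (auto intro: dvd_trans)
  then have "g dvd (Y * a + Z * b) - (Y * a + Z * b - 1)" by (rule dvd_diff)
  then show "gcd (gcd a b) D = 1" by (simp add: g_def)
qed

lemma bezout_combination_cong:
  fixes Y Z Y' Z' b c b' d' D :: int
  assumes "[Y * b + Z * c = 1] (mod D)" "[Y' * b + Z' * c = 1] (mod D)"
    "[b * b' + c * d' = 0] (mod D)"
  shows "[Y * d' - Z * b' = Y' * d' - Z' * b'] (mod D)"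
proof -
  have "[Y * d' - Z * b' = (Y * d' - Z * b') * (Y' * b + Z' * c)] (mod D)"
    using cong_scalar_left[OF assms(2), of "Y * d' - Z * b'"] by (simp add: cong_sym_eq)
  also have "(Y * d' - Z * b') * (Y' * b + Z' * c) =
      (Y' * d' - Z' * b') * (Y * b + Z * c) + (Y * Z' - Z * Y') * (b * b' + c * d')"
    by (simp add: algebra_simps)
  also have "[\<dots> = (Y' * d' - Z' * b') * 1 + (Y * Z' - Z * Y') * 0] (mod D)"
    by (intro cong_add cong_scalar_left assms(1,3))
  finally show ?thesis by simp
qed

lemma bezout_cong_shift:
  fixes Y Z B C B' C' D k l :: int
  assumes "[Y * B + Z * C = 1] (mod D)" "B' = B + D * k" "[C' = C - l * B] (mod D)"
  shows "[(Y + l * Z) * B' + Z * C' = 1] (mod D)"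
proof -
  have "[(Y + l * Z) * B' + Z * C' = (Y + l * Z) * B + Z * (C - l * B)] (mod D)"
    using assms(2,3) by (intro cong_add cong_mult cong_refl) (simp_all add: cong_def)
  also have "(Y + l * Z) * B + Z * (C - l * B) = Y * B + Z * C" by (simp add: algebra_simps)
  finally show ?thesis using assms(1) by (rule cong_trans)
qed

lemma bezout_cong_scale:
  fixes Y Z B C e i D :: int
  assumes "[Y * B + Z * C = 1] (mod D)" "[e * i = 1] (mod D)"
  shows "[Y * B + (Z * i) * (e * C) = 1] (mod D)"
proof -
  have "Y * B + (Z * i) * (e * C) = Y * B + (Z * C) * (e * i)" by (simp add: ac_simps)
  also have "[\<dots> = Y * B + (Z * C) * 1] (mod D)"
    by (intro cong_add cong_scalar_left cong_refl assms(2))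
  finally show ?thesis using assms(1) by (simp add: cong_trans)
qed

lemma bezout_imp_cong: "p * e + q * c = 1 \<Longrightarrow> [p * e = 1] (mod c)"
  for p e q c :: int
  unfolding cong_iff_lin by (intro exI[of _ q]) (simp add: algebra_simps)

lemma cong_mult_inverse_iff:
  fixes e i c x t :: int
  assumes "[e * i = 1] (mod c)"
  shows "[e * x = t] (mod c) \<longleftrightarrow> [x = i * t] (mod c)"
proof -
  have "[x = i * (e * x)] (mod c)"
    using cong_scalar_right[OF assms, of x] by (simp add: cong_sym_eq ac_simps)
  moreover have "[e * (i * t) = t] (mod c)"
    using cong_scalar_right[OF assms, of t] by (simp add: ac_simps)
  ultimately show ?thesis
    by (meson cong_scalar_left cong_sym cong_trans)
qed

lemma cong_inverse_shift:
  fixes x y m C d l B :: int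
  assumes "[x * y = 1] (mod m)" "[C = y * (d + l * B)] (mod m)"
  shows "[d = x * C - l * B] (mod m)"
proof -
  have "[x * C = d + l * B] (mod m)" using assms cong_mult_inverse_iff by blast
  then have "[x * C - l * B = d + l * B - l * B] (mod m)" by (rule cong_diff[OF _ cong_refl])
  then show ?thesis by (simp add: cong_sym_eq)
qed

lemma coprime_cong_mult_iff:
  fixes m n x y :: int
  assumes "coprime m n"
  shows "[x = y] (mod m * n) \<longleftrightarrow> [x = y] (mod m) \<and> [x = y] (mod n)"
  using assms coprime_cong_mult cong_modulus_mult[of x y m n] cong_modulus_mult[of x y n m]
  by (auto simp: mult.commute)

lemma cong_coprime_box_eq:
  fixes m n x y :: int
  assumes "coprime m n" "x \<in> {0..<m * n}" "y \<in> {0..<m * n}" "[x = y] (mod m)" "[x = y] (mod n)"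
  shows "x = y"
  using coprime_cong_mult[OF assms(4,5,1)] assms(2,3) by (auto intro: cong_less_imp_eq_int)

lemma binary_chinese_remainder_box:
  fixes m n a b :: int
  assumes "m > 0" "n > 0" "coprime m n"
  obtains x where "x \<in> {0..<m * n}" "[x = a] (mod m)" "[x = b] (mod n)"
proof -
  obtain y where y: "[y = a] (mod m)" "[y = b] (mod n)"
    using binary_chinese_remainder_int[OF assms(3)] by blast
  show ?thesis
  proof (rule that)
    show "y mod (m * n) \<in> {0..<m * n}" using assms(1,2) by simp
    show "[y mod (m * n) = a] (mod m)" "[y mod (m * n) = b] (mod n)"
      using y by (simp_all add: cong_def mod_mod_cancel)
  qed
qed

lemma bij_betw_mod_pair:
  fixes m n :: int
  assumes "m > 0" "n > 0" "coprime m n"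
  shows "bij_betw (\<lambda>u. (u mod m, u mod n)) {0..<m * n} ({0..<m} \<times> {0..<n})"
proof -
  have "inj_on (\<lambda>u. (u mod m, u mod n)) {0..<m * n}"
    by (rule inj_onI) (auto simp: cong_def intro: cong_coprime_box_eq[OF assms(3)])
  moreover have "(\<lambda>u. (u mod m, u mod n)) ` {0..<m * n} = {0..<m} \<times> {0..<n}"
  proof (intro equalityI subsetI)
    fix z assume "z \<in> {0..<m} \<times> {0..<n}"
    then obtain x y where z: "z = (x, y)" "x \<in> {0..<m}" "y \<in> {0..<n}" by blast
    obtain u where "u \<in> {0..<m * n}" "[u = x] (mod m)" "[u = y] (mod n)"
      by (rule binary_chinese_remainder_box[OF assms])
    then show "z \<in> (\<lambda>u. (u mod m, u mod n)) ` {0..<m * n}"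
      using z by (auto simp: cong_def intro!: image_eqI[of _ _ u])
  qed (use assms in auto)
  ultimately show ?thesis by (simp add: bij_betw_def)
qed

lemma coprime_gcd_mult_modulus:
  fixes B C x y m n :: int
  assumes "coprime (gcd B (x * C)) m" "coprime (gcd B (y * C)) n"
  shows "coprime (gcd B C) (m * n)"
proof -
  have "gcd B C dvd gcd B (x * C)" "gcd B C dvd gcd B (y * C)" by (simp_all add: gcd_mono)
  then have "coprime (gcd B C) m" "coprime (gcd B C) n"
    using coprime_divisors[OF _ dvd_refl assms(1)] coprime_divisors[OF _ dvd_refl assms(2)] by auto
  then show ?thesis by simp
qed

lemma cong_lift_coprime:
  fixes g M N :: int
  assumes "coprime g M" "N \<noteq> 0"
  obtains \<gamma> where "[\<gamma> = g] (mod M)" "coprime \<gamma> N"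
proof -
  define S where "S = {p \<in> prime_factors N. \<not> p dvd g}"
  define \<gamma> where "\<gamma> = g + M * \<Prod>S"
  have fin: "finite S" by (simp add: S_def)
  have no_prime_factor: "\<not> p dvd \<gamma>" if p: "prime p" "p dvd N" for p
  proof (cases "p dvd g")
    case True
    then have "\<not> p dvd M" using assms(1) p(1) by (meson coprime_common_divisor not_prime_unit)
    moreover have "\<not> p dvd \<Prod>S"
    proof
      assume "p dvd \<Prod>S"
      then obtain q where "q \<in> S" "p dvd q" using prime_dvd_prod_iff[OF fin p(1)] by auto
      then show False using True p(1) primes_dvd_imp_eq[OF p(1)] by (auto simp: S_def)
    qed
    ultimately show ?thesis using True p(1)
      by (simp add: \<gamma>_def prime_dvd_mult_iff dvd_add_right_iff)
  next
    case False
    then have "p dvd \<Prod>S" using p assms(2)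
      by (auto simp: S_def in_prime_factors_iff intro: dvd_prodI[OF fin])
    then show ?thesis using False by (simp add: \<gamma>_def dvd_add_left_iff)
  qed
  moreover have "coprime \<gamma> N"
  proof (rule ccontr)
    assume "\<not> coprime \<gamma> N"
    then obtain c where c: "c dvd \<gamma>" "c dvd N" "\<not> is_unit c" by (rule not_coprimeE)
    then have "\<bar>c\<bar> \<noteq> 1" by auto
    then obtain p where "prime p" "p dvd c" by (rule prime_factor_int)
    then show False using c no_prime_factor by (meson dvd_trans)
  qed
  moreover have "[\<gamma> = g] (mod M)" by (simp add: \<gamma>_def cong_def)
  ultimately show ?thesis using that by blast
qed

lemma sum_periodic_mult_unit:
  fixes f :: "int \<Rightarrow> 'a::comm_monoid_add"
  assumes "D > 0" "coprime \<gamma> D" "\<And>x y. [x = y] (mod D) \<Longrightarrow> f x = f y"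
  shows "(\<Sum>u\<in>{0..<D}. f (\<gamma> * u)) = (\<Sum>u\<in>{0..<D}. f u)"
proof -
  define h where "h u = (\<gamma> * u) mod D" for u
  have "inj_on h {0..<D}"
  proof (rule inj_onI)
    fix x y assume "x \<in> {0..<D}" "y \<in> {0..<D}" "h x = h y"
    then show "x = y"
      using cong_mult_lcancel[OF assms(2)]
      by (auto simp: h_def cong_def intro: cong_less_imp_eq_int)
  qed
  moreover have "h ` {0..<D} \<subseteq> {0..<D}" using assms(1) by (auto simp: h_def)
  ultimately have "bij_betw h {0..<D} {0..<D}"
    using endo_inj_surj[of "{0..<D}" h] by (simp add: bij_betw_def)
  moreover have "f (\<gamma> * u) = f (h u)" for u by (rule assms(3)) (simp add: h_def)
  ultimately show ?thesis using sum.reindex_bij_betw[of h "{0..<D}" "{0..<D}" f] by simp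
qed


section \<open>The summation set\<close>

type_synonym kl_index = "int \<times> int \<times> int \<times> int"

definition kl_admissible :: "int \<Rightarrow> int \<Rightarrow> kl_index \<Rightarrow> bool" where
  "kl_admissible D1 D2 = (\<lambda>(B1, C1, B2, C2). gcd (gcd B1 C1) D1 = 1 \<and> gcd (gcd B2 C2) D2 = 1 \<and>
     [D1 * C2 + B1 * B2 + C1 * D2 = 0] (mod (D1 * D2)))"

definition residue_box :: "int \<Rightarrow> int \<Rightarrow> kl_index set" where
  "residue_box D1 D2 = {0..<D1} \<times> {0..<D1} \<times> {0..<D2} \<times> {0..<D2}"

definition kl_set :: "int \<Rightarrow> int \<Rightarrow> kl_index set" where
  "kl_set D1 D2 = {v \<in> residue_box D1 D2. kl_admissible D1 D2 v}"

definition swap_index :: "kl_index \<Rightarrow> kl_index" where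
  "swap_index = (\<lambda>(B1, C1, B2, C2). (B2, C2, B1, C1))"

definition n1_coeff :: "int \<Rightarrow> int \<Rightarrow> kl_index \<Rightarrow> int" where
  "n1_coeff D1 D2 = (\<lambda>(B1, C1, B2, C2).
     case SOME (Y, Z). [Y * B1 + Z * C1 = 1] (mod D1) of (Y, Z) \<Rightarrow> Y * D2 - Z * B2)"

text \<open>The summand of \<open>kl3\<close> is symmetric under exchanging \<open>(B1, C1, D1)\<close> with \<open>(B2, C2, D2)\<close>.\<close>

definition n2_coeff :: "int \<Rightarrow> int \<Rightarrow> kl_index \<Rightarrow> int" where
  "n2_coeff D1 D2 v = n1_coeff D2 D1 (swap_index v)"

lemma finite_kl_set: "finite (kl_set D1 D2)"
  by (simp add: kl_set_def residue_box_def)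

lemma kl3_eq_sum_kl_set:
  "kl3 m1 m2 n1 n2 D1 D2 = (\<Sum>(B1, C1, B2, C2)\<in>kl_set D1 D2.
     ee (of_int (m1 * B1 + n1 * n1_coeff D1 D2 (B1, C1, B2, C2)) / of_int D1) *
     ee (of_int (m2 * B2 + n2 * n2_coeff D1 D2 (B1, C1, B2, C2)) / of_int D2))"
  unfolding kl3_def kl_set_def residue_box_def kl_admissible_def
  by (intro sum.cong) (auto simp: n1_coeff_def n2_coeff_def swap_index_def split: prod.splits)

lemma kl_admissible_swap: "kl_admissible D2 D1 (swap_index v) = kl_admissible D1 D2 v"
  by (cases v) (simp add: kl_admissible_def swap_index_def ac_simps)

lemma kl_admissible_cong:
  assumes "kl_admissible D1 D2 (B1, C1, B2, C2)"
  shows "[B1 * B2 + C1 * D2 = 0] (mod D1)"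
proof -
  have "D1 dvd D1 * C2 + (B1 * B2 + C1 * D2)"
    using cong_modulus_mult[of _ 0 D1 D2] assms
    by (simp add: kl_admissible_def cong_0_iff add.assoc)
  then show ?thesis by (simp add: cong_0_iff dvd_add_right_iff)
qed

lemma n1_coeff_cong:
  assumes "kl_admissible D1 D2 (B1, C1, B2, C2)" and bez: "[Y * B1 + Z * C1 = 1] (mod D1)"
  shows "[n1_coeff D1 D2 (B1, C1, B2, C2) = Y * D2 - Z * B2] (mod D1)"
proof -
  let ?P = "\<lambda>(Y, Z). [Y * B1 + Z * C1 = 1] (mod D1)"
  obtain Y' Z' where some: "Eps ?P = (Y', Z')" by fastforce
  have "?P (Y', Z')" unfolding some[symmetric] by (rule someI[of ?P "(Y, Z)"]) (simp add: bez)
  then have "[Y' * D2 - Z' * B2 = Y * D2 - Z * B2] (mod D1)"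
    using bezout_combination_cong bez kl_admissible_cong[OF assms(1)] by simp
  then show ?thesis by (simp add: n1_coeff_def some)
qed

lemma n2_coeff_cong:
  assumes "kl_admissible D1 D2 (B1, C1, B2, C2)" "[Y * B2 + Z * C2 = 1] (mod D2)"
  shows "[n2_coeff D1 D2 (B1, C1, B2, C2) = Y * D1 - Z * B1] (mod D2)"
  using n1_coeff_cong[of D2 D1 B2 C2 B1 C1] kl_admissible_swap[of D2 D1 "(B1, C1, B2, C2)"] assms
  by (simp add: n2_coeff_def swap_index_def)

text \<open>Shifting \<open>B2\<close> by a multiple \<open>D2 * l\<close> keeps \<open>D1 * C2 + B1 * B2 + C1 * D2\<close> invariant
  modulo \<open>D1 * D2\<close> only if \<open>C1\<close> is shifted by \<open>-l * B1\<close> at the same time (and symmetrically).\<close>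

definition shift_equiv :: "int \<Rightarrow> int \<Rightarrow> kl_index \<Rightarrow> kl_index \<Rightarrow> bool" where
  "shift_equiv D1 D2 = (\<lambda>(B1, C1, B2, C2) (B1', C1', B2', C2'). \<exists>k l.
     B1' = B1 + D1 * k \<and> B2' = B2 + D2 * l \<and>
     [C1' = C1 - l * B1] (mod D1) \<and> [C2' = C2 - k * B2] (mod D2))"

definition reduce :: "int \<Rightarrow> int \<Rightarrow> kl_index \<Rightarrow> kl_index" where
  "reduce D1 D2 = (\<lambda>(B1, C1, B2, C2).
     (B1 mod D1, (C1 + (B2 div D2) * B1) mod D1, B2 mod D2, (C2 + (B1 div D1) * B2) mod D2))"

lemma shift_equiv_sym:
  assumes "shift_equiv D1 D2 v w"
  shows "shift_equiv D1 D2 w v"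
proof -
  obtain B1 C1 B2 C2 B1' C1' B2' C2' where vw: "v = (B1, C1, B2, C2)" "w = (B1', C1', B2', C2')"
    by (cases v, cases w) auto
  from assms obtain k l where kl: "B1' = B1 + D1 * k" "B2' = B2 + D2 * l"
    "[C1' = C1 - l * B1] (mod D1)" "[C2' = C2 - k * B2] (mod D2)"
    by (auto simp: vw shift_equiv_def)
  have "[C1' - (- l) * B1' = (C1 - l * B1) - (- l) * B1'] (mod D1)"
    by (intro cong_diff kl cong_refl)
  then have "[C1 = C1' - (- l) * B1'] (mod D1)"
    by (simp add: kl algebra_simps cong_sym_eq cong_def)
  moreover have "[C2' - (- k) * B2' = (C2 - k * B2) - (- k) * B2'] (mod D2)"
    by (intro cong_diff kl cong_refl)
  then have "[C2 = C2' - (- k) * B2'] (mod D2)"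
    by (simp add: kl algebra_simps cong_sym_eq cong_def)
  moreover have "B1 = B1' + D1 * (- k)" "B2 = B2' + D2 * (- l)" by (simp_all add: kl)
  ultimately show ?thesis unfolding vw shift_equiv_def by blast
qed

lemma shift_equiv_trans:
  assumes "shift_equiv D1 D2 u v" "shift_equiv D1 D2 v w"
  shows "shift_equiv D1 D2 u w"
proof -
  obtain B1 C1 B2 C2 B1' C1' B2' C2' B1'' C1'' B2'' C2'' where uvw: "u = (B1, C1, B2, C2)"
    "v = (B1', C1', B2', C2')" "w = (B1'', C1'', B2'', C2'')"
    by (cases u, cases v, cases w) auto
  from assms(1) obtain k l where kl: "B1' = B1 + D1 * k" "B2' = B2 + D2 * l"
    "[C1' = C1 - l * B1] (mod D1)" "[C2' = C2 - k * B2] (mod D2)"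
    by (auto simp: uvw shift_equiv_def)
  from assms(2) obtain k' l' where kl': "B1'' = B1' + D1 * k'" "B2'' = B2' + D2 * l'"
    "[C1'' = C1' - l' * B1'] (mod D1)" "[C2'' = C2' - k' * B2'] (mod D2)"
    by (auto simp: uvw shift_equiv_def)
  have "[C1'' = C1 - (l + l') * B1] (mod D1)"
  proof -
    have "[C1'' = (C1 - l * B1) - l' * B1'] (mod D1)"
      using kl'(3) kl(3) by (meson cong_diff cong_refl cong_trans)
    also have "(C1 - l * B1) - l' * B1' = C1 - (l + l') * B1 + D1 * (- l' * k)"
      by (simp add: kl algebra_simps)
    finally show ?thesis using cong_add_mult_self cong_trans by blast
  qed
  moreover have "[C2'' = C2 - (k + k') * B2] (mod D2)"
  proof -
    have "[C2'' = (C2 - k * B2) - k' * B2'] (mod D2)"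
      using kl'(4) kl(4) by (meson cong_diff cong_refl cong_trans)
    also have "(C2 - k * B2) - k' * B2' = C2 - (k + k') * B2 + D2 * (- k' * l)"
      by (simp add: kl algebra_simps)
    finally show ?thesis using cong_add_mult_self cong_trans by blast
  qed
  moreover have "B1'' = B1 + D1 * (k + k')" "B2'' = B2 + D2 * (l + l')"
    by (simp_all add: kl kl' algebra_simps)
  ultimately show ?thesis unfolding uvw shift_equiv_def by blast
qed

lemma shift_equiv_swap:
  "shift_equiv D2 D1 (swap_index v) (swap_index w) = shift_equiv D1 D2 v w"
  by (cases v, cases w) (auto simp: shift_equiv_def swap_index_def)

lemma kl_admissible_shift:
  assumes "kl_admissible D1 D2 v" "shift_equiv D1 D2 v w"
  shows "kl_admissible D1 D2 w"
proof -
  obtain B1 C1 B2 C2 B1' C1' B2' C2' where vw: "v = (B1, C1, B2, C2)" "w = (B1', C1', B2', C2')"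
    by (cases v, cases w) auto
  from assms(2) obtain k l where kl: "B1' = B1 + D1 * k" "B2' = B2 + D2 * l"
    "[C1' = C1 - l * B1] (mod D1)" "[C2' = C2 - k * B2] (mod D2)"
    by (auto simp: vw shift_equiv_def)
  from assms(1) have g1: "gcd (gcd B1 C1) D1 = 1" and g2: "gcd (gcd B2 C2) D2 = 1"
    and c: "[D1 * C2 + B1 * B2 + C1 * D2 = 0] (mod (D1 * D2))"
    by (auto simp: vw kl_admissible_def)
  have "gcd (gcd B1' C1') D1 = 1" "gcd (gcd B2' C2') D2 = 1"
    using g1 g2 bezout_cong_shift[OF _ kl(1,3)] bezout_cong_shift[OF _ kl(2,4)]
    by (meson gcd_eq_1_iff_bezout_cong)+
  moreover have "[D1 * C2' + B1' * B2' + C1' * D2 = 0] (mod (D1 * D2))"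
  proof -
    obtain m n where mn: "C1' = C1 - l * B1 + D1 * m" "C2' = C2 - k * B2 + D2 * n"
      using kl(3,4) by (metis cong_iff_lin cong_sym)
    have "D1 * C2' + B1' * B2' + C1' * D2 =
        (D1 * C2 + B1 * B2 + C1 * D2) + (D1 * D2) * (n + k * l + m)"
      unfolding mn kl(1,2) by (simp add: algebra_simps)
    then have "[D1 * C2' + B1' * B2' + C1' * D2 = D1 * C2 + B1 * B2 + C1 * D2] (mod (D1 * D2))"
      by (simp only: cong_add_mult_self)
    then show ?thesis using c by (rule cong_trans)
  qed
  ultimately show ?thesis by (simp add: vw kl_admissible_def)
qed

lemma n1_coeff_shift:
  assumes "kl_admissible D1 D2 v" "shift_equiv D1 D2 v w"
  shows "[n1_coeff D1 D2 w = n1_coeff D1 D2 v] (mod D1)"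
proof -
  obtain B1 C1 B2 C2 B1' C1' B2' C2' where vw: "v = (B1, C1, B2, C2)" "w = (B1', C1', B2', C2')"
    by (cases v, cases w) auto
  from assms(2) obtain k l where kl: "B1' = B1 + D1 * k" "B2' = B2 + D2 * l"
    "[C1' = C1 - l * B1] (mod D1)"
    by (auto simp: vw shift_equiv_def)
  from assms(1) obtain Y Z where YZ: "[Y * B1 + Z * C1 = 1] (mod D1)"
    by (auto simp: vw kl_admissible_def gcd_eq_1_iff_bezout_cong)
  have "[n1_coeff D1 D2 w = (Y + l * Z) * D2 - Z * B2'] (mod D1)"
    using n1_coeff_cong[OF _ bezout_cong_shift[OF YZ kl(1,3)]] kl_admissible_shift[OF assms]
    by (simp add: vw)
  also have "(Y + l * Z) * D2 - Z * B2' = Y * D2 - Z * B2" by (simp add: kl algebra_simps)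
  also have "[\<dots> = n1_coeff D1 D2 v] (mod D1)"
    using n1_coeff_cong[OF _ YZ] assms(1) by (simp add: vw cong_sym_eq)
  finally show ?thesis .
qed

lemma n2_coeff_shift:
  assumes "kl_admissible D1 D2 v" "shift_equiv D1 D2 v w"
  shows "[n2_coeff D1 D2 w = n2_coeff D1 D2 v] (mod D2)"
  using n1_coeff_shift[of D2 D1 "swap_index v" "swap_index w"] assms
  by (simp add: n2_coeff_def kl_admissible_swap shift_equiv_swap)

lemma shift_equiv_reduce: "shift_equiv D1 D2 v (reduce D1 D2 v)"
proof -
  obtain B1 C1 B2 C2 where v: "v = (B1, C1, B2, C2)" by (cases v) auto
  have "B1 mod D1 = B1 + D1 * (- (B1 div D1))" "B2 mod D2 = B2 + D2 * (- (B2 div D2))"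
    by (simp_all add: minus_div_mult_eq_mod[symmetric] algebra_simps)
  moreover have "[(C1 + (B2 div D2) * B1) mod D1 = C1 - (- (B2 div D2)) * B1] (mod D1)"
    "[(C2 + (B1 div D1) * B2) mod D2 = C2 - (- (B1 div D1)) * B2] (mod D2)"
    by simp_all
  ultimately show ?thesis unfolding v reduce_def shift_equiv_def prod.case by blast
qed

lemma reduce_in_residue_box: "D1 > 0 \<Longrightarrow> D2 > 0 \<Longrightarrow> reduce D1 D2 v \<in> residue_box D1 D2"
  by (cases v) (simp add: reduce_def residue_box_def)

lemma reduce_in_kl_set:
  "D1 > 0 \<Longrightarrow> D2 > 0 \<Longrightarrow> kl_admissible D1 D2 v \<Longrightarrow> reduce D1 D2 v \<in> kl_set D1 D2"
  using reduce_in_residue_box kl_admissible_shift[OF _ shift_equiv_reduce] by (simp add: kl_set_def)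

lemma reduce_residue_box: "v \<in> residue_box D1 D2 \<Longrightarrow> reduce D1 D2 v = v"
  by (cases v) (simp add: reduce_def residue_box_def)

lemma shift_equiv_residue_box_eq:
  assumes "v \<in> residue_box D1 D2" "w \<in> residue_box D1 D2" "shift_equiv D1 D2 v w"
  shows "v = w"
proof -
  obtain B1 C1 B2 C2 B1' C1' B2' C2' where vw: "v = (B1, C1, B2, C2)" "w = (B1', C1', B2', C2')"
    by (cases v, cases w) auto
  from assms(3) obtain k l where kl: "B1' = B1 + D1 * k" "B2' = B2 + D2 * l"
    "[C1' = C1 - l * B1] (mod D1)" "[C2' = C2 - k * B2] (mod D2)"
    by (auto simp: vw shift_equiv_def)
  have box: "B1 \<in> {0..<D1}" "B1' \<in> {0..<D1}" "C1 \<in> {0..<D1}" "C1' \<in> {0..<D1}"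
    "B2 \<in> {0..<D2}" "B2' \<in> {0..<D2}" "C2 \<in> {0..<D2}" "C2' \<in> {0..<D2}"
    using assms(1,2) by (auto simp: vw residue_box_def)
  have "[B1' = B1] (mod D1)" "[B2' = B2] (mod D2)" unfolding kl(1,2) by (rule cong_add_mult_self)+
  then have B: "B1' = B1" "B2' = B2" using box by (auto intro: cong_less_imp_eq_int)
  then have "k = 0" "l = 0" using kl(1,2) box by auto
  then have "[C1' = C1] (mod D1)" "[C2' = C2] (mod D2)" using kl(3,4) by simp_all
  then have "C1' = C1" "C2' = C2" using box by (auto intro: cong_less_imp_eq_int)
  then show ?thesis by (simp add: vw B)
qed

lemma reduce_eq_iff:
  assumes "D1 > 0" "D2 > 0"
  shows "reduce D1 D2 v = reduce D1 D2 w \<longleftrightarrow> shift_equiv D1 D2 v w"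
proof
  assume "reduce D1 D2 v = reduce D1 D2 w"
  then have "shift_equiv D1 D2 v (reduce D1 D2 w)" using shift_equiv_reduce[of D1 D2 v] by simp
  then show "shift_equiv D1 D2 v w" using shift_equiv_sym[OF shift_equiv_reduce]
    by (rule shift_equiv_trans)
next
  assume "shift_equiv D1 D2 v w"
  then have "shift_equiv D1 D2 (reduce D1 D2 v) (reduce D1 D2 w)"
    by (meson shift_equiv_reduce shift_equiv_sym shift_equiv_trans)
  then show "reduce D1 D2 v = reduce D1 D2 w"
    using reduce_in_residue_box[OF assms] by (intro shift_equiv_residue_box_eq)
qed

lemma reduce_eq_of_shift_equiv:
  assumes "D1 > 0" "D2 > 0" "w \<in> residue_box D1 D2" "shift_equiv D1 D2 v w"
  shows "reduce D1 D2 v = w"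
  using assms reduce_eq_iff[OF assms(1,2), of v w] reduce_residue_box[OF assms(3)] by simp


section \<open>The restricted Kloosterman sum\<close>

definition restricted_term :: "int \<Rightarrow> int \<Rightarrow> int \<Rightarrow> int \<Rightarrow> int \<Rightarrow> int \<Rightarrow> kl_index \<Rightarrow> complex" where
  "restricted_term D1 D2 a b u t = (\<lambda>(B1, C1, B2, C2).
     if [B2 = u] (mod D2) \<and> [n1_coeff D1 D2 (B1, C1, B2, C2) = t] (mod D1)
     then ee (of_int (a * B1) / of_int D1) * ee (of_int (b
       * n2_coeff D1 D2 (B1, C1, B2, C2)) / of_int D2)
     else 0)"

definition restricted_kl :: "int \<Rightarrow> int \<Rightarrow> int \<Rightarrow> int \<Rightarrow> int \<Rightarrow> int \<Rightarrow> complex" where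
  "restricted_kl D1 D2 a b u t = (\<Sum>v\<in>kl_set D1 D2. restricted_term D1 D2 a b u t v)"

definition restricted_l1 :: "int \<Rightarrow> int \<Rightarrow> int \<Rightarrow> int \<Rightarrow> int \<Rightarrow> real" where
  "restricted_l1 D1 D2 a b t = (\<Sum>u\<in>{0..<D2}. cmod (restricted_kl D1 D2 a b u t))"

lemma sum_restricted_term_characters:
  assumes "D1 > 0" "D2 > 0"
  shows "(\<Sum>x\<in>{0..<D1}. \<Sum>y\<in>{0..<D2}. (case v of (B1, C1, B2, C2) \<Rightarrow>
      ee (of_int (a * B1 + x * n1_coeff D1 D2 (B1, C1, B2, C2)) / of_int D1) *
      ee (of_int (y * B2 + 1 * n2_coeff D1 D2 (B1, C1, B2, C2)) / of_int D2)) *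
      ee (of_int (- x * t) / of_int D1) * ee (of_int (- y * u) / of_int D2))
    = of_int (D1 * D2) * restricted_term D1 D2 a 1 u t v"
proof -
  obtain B1 C1 B2 C2 where v: "v = (B1, C1, B2, C2)" by (cases v) auto
  define n where "n = n1_coeff D1 D2 (B1, C1, B2, C2)"
  define m where "m = n2_coeff D1 D2 (B1, C1, B2, C2)"
  define P where "P = ee (of_int (a * B1) / of_int D1) * ee (of_int (1 * m) / of_int D2)"
  note summand = ee_frac_regroup[of "a * B1" _ n D1 _ B2 "1 * m" D2 t u, folded P_def]
  have "(\<Sum>x\<in>{0..<D1}. \<Sum>y\<in>{0..<D2}. (case v of (B1, C1, B2, C2) \<Rightarrow>
      ee (of_int (a * B1 + x * n1_coeff D1 D2 (B1, C1, B2, C2)) / of_int D1) *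
      ee (of_int (y * B2 + 1 * n2_coeff D1 D2 (B1, C1, B2, C2)) / of_int D2)) *
      ee (of_int (- x * t) / of_int D1) * ee (of_int (- y * u) / of_int D2))
    = (\<Sum>x\<in>{0..<D1}. \<Sum>y\<in>{0..<D2}.
        P * (ee (of_int (x * (n - t)) / of_int D1) * ee (of_int (y * (B2 - u)) / of_int D2)))"
    unfolding v prod.case n_def[symmetric] m_def[symmetric] summand ..
  also have "\<dots> = P * ((\<Sum>x\<in>{0..<D1}. ee (of_int (x * (n - t)) / of_int D1)) *
      (\<Sum>y\<in>{0..<D2}. ee (of_int (y * (B2 - u)) / of_int D2)))"
    by (simp only: sum_product) (simp only: sum_distrib_left)
  also have "\<dots> = of_int (D1 * D2) * restricted_term D1 D2 a 1 u t v"
    unfolding ee_sum_orthogonality[OF assms(1)] ee_sum_orthogonality[OF assms(2)]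
    by (simp add: restricted_term_def v P_def n_def m_def cong_iff_dvd_diff)
  finally show ?thesis .
qed

lemma kl3_hat_eq_restricted_kl:
  assumes "D1 > 0" "D2 > 0"
  shows "kl3_hat a u t 1 D1 D2 = restricted_kl D1 D2 a 1 u t"
proof -
  define f where "f x y v = (case v of (B1, C1, B2, C2) \<Rightarrow>
      ee (of_int (a * B1 + x * n1_coeff D1 D2 (B1, C1, B2, C2)) / of_int D1) *
      ee (of_int (y * B2 + 1 * n2_coeff D1 D2 (B1, C1, B2, C2)) / of_int D2)) *
      ee (of_int (- x * t) / of_int D1) * ee (of_int (- y * u) / of_int D2)" for x y v
  have "kl3_hat a u t 1 D1 D2 =
      (1 / of_int (D1 * D2)) * (\<Sum>x\<in>{0..<D1}. \<Sum>y\<in>{0..<D2}. \<Sum>v\<in>kl_set D1 D2. f x y v)"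
    unfolding f_def by (simp only: kl3_hat_def kl3_eq_sum_kl_set sum_distrib_right)
  also have "(\<Sum>x\<in>{0..<D1}. \<Sum>y\<in>{0..<D2}. \<Sum>v\<in>kl_set D1 D2. f x y v) =
      (\<Sum>v\<in>kl_set D1 D2. \<Sum>x\<in>{0..<D1}. \<Sum>y\<in>{0..<D2}. f x y v)"
    by (subst sum.swap) (intro sum.cong refl sum.swap)
  also have "\<dots> = (\<Sum>v\<in>kl_set D1 D2. of_int (D1 * D2) * restricted_term D1 D2 a 1 u t v)"
    unfolding f_def by (simp only: sum_restricted_term_characters[OF assms])
  finally show ?thesis
    using assms by (simp add: restricted_kl_def sum_distrib_left[symmetric])
qed

lemma restricted_term_shift:
  assumes "kl_admissible D1 D2 v" "shift_equiv D1 D2 v w"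
  shows "restricted_term D1 D2 a b u t w = restricted_term D1 D2 a b u t v"
proof -
  obtain B1 C1 B2 C2 B1' C1' B2' C2' where vw: "v = (B1, C1, B2, C2)" "w = (B1', C1', B2', C2')"
    by (cases v, cases w) auto
  from assms(2) obtain k l where "B1' = B1 + D1 * k" "B2' = B2 + D2 * l"
    by (auto simp: vw shift_equiv_def)
  then have B1: "[B1' = B1] (mod D1)" and B2: "[B2' = B2] (mod D2)"
    by (simp_all add: cong_add_mult_self)
  have "ee (of_int (a * B1') / of_int D1) = ee (of_int (a * B1) / of_int D1)"
    using B1 by (intro ee_cong cong_scalar_left)
  moreover have "ee (of_int (b * n2_coeff D1 D2 w) / of_int D2)
      = ee (of_int (b * n2_coeff D1 D2 v) / of_int D2)"
    using n2_coeff_shift[OF assms] by (intro ee_cong cong_scalar_left)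
  moreover have "[B2' = u] (mod D2) \<longleftrightarrow> [B2 = u] (mod D2)"
    "[n1_coeff D1 D2 w = t] (mod D1) \<longleftrightarrow> [n1_coeff D1 D2 v = t] (mod D1)"
    using B2 n1_coeff_shift[OF assms] by (meson cong_sym cong_trans)+
  ultimately show ?thesis by (simp add: restricted_term_def vw)
qed

lemma restricted_term_reduce:
  assumes "kl_admissible D1 D2 v"
  shows "restricted_term D1 D2 a b u t (reduce D1 D2 v) = restricted_term D1 D2 a b u t v"
  using restricted_term_shift[OF assms shift_equiv_reduce] .

lemma restricted_kl_cong:
  assumes "[a = a'] (mod D1)" "[b = b'] (mod D2)" "[u = u'] (mod D2)" "[t = t'] (mod D1)"
  shows "restricted_kl D1 D2 a b u t = restricted_kl D1 D2 a' b' u' t'"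
proof -
  have "restricted_term D1 D2 a b u t v = restricted_term D1 D2 a' b' u' t' v" for v
  proof -
    obtain B1 C1 B2 C2 where v: "v = (B1, C1, B2, C2)" by (cases v) auto
    have "ee (of_int (a * B1) / of_int D1) = ee (of_int (a' * B1) / of_int D1)"
      "ee (of_int (b * n2_coeff D1 D2 v) / of_int D2)
          = ee (of_int (b' * n2_coeff D1 D2 v) / of_int D2)"
      by (intro ee_cong cong_scalar_right assms(1,2))+
    moreover have "[B2 = u] (mod D2) \<longleftrightarrow> [B2 = u'] (mod D2)"
      "[n1_coeff D1 D2 v = t] (mod D1) \<longleftrightarrow> [n1_coeff D1 D2 v = t'] (mod D1)"
      using assms(3,4) by (meson cong_sym cong_trans)+
    ultimately show ?thesis by (simp add: restricted_term_def v)
  qed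
  then show ?thesis by (simp add: restricted_kl_def)
qed

lemma restricted_l1_cong:
  assumes "[a = a'] (mod D1)" "[b = b'] (mod D2)" "[t = t'] (mod D1)"
  shows "restricted_l1 D1 D2 a b t = restricted_l1 D1 D2 a' b' t'"
  using restricted_kl_cong[OF assms(1,2) cong_refl assms(3)] by (simp add: restricted_l1_def)


section \<open>Scaling by a unit\<close>

definition scale_unit :: "int \<Rightarrow> kl_index \<Rightarrow> kl_index" where
  "scale_unit \<gamma> = (\<lambda>(B1, C1, B2, C2). (B1, \<gamma> * C1, \<gamma> * B2, \<gamma> * C2))"

lemma kl_admissible_scale_unit:
  assumes "coprime \<gamma> D1" "coprime \<gamma> D2" "kl_admissible D1 D2 v"
  shows "kl_admissible D1 D2 (scale_unit \<gamma> v)"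
proof -
  obtain B1 C1 B2 C2 where v: "v = (B1, C1, B2, C2)" by (cases v) auto
  obtain g h where g: "[\<gamma> * g = 1] (mod D1)" and h: "[\<gamma> * h = 1] (mod D2)"
    using assms(1,2) cong_solve_coprime_int by blast
  from assms(3) obtain Y Z Y' Z' where YZ: "[Y * B1 + Z * C1 = 1] (mod D1)"
    and YZ': "[Y' * B2 + Z' * C2 = 1] (mod D2)"
    and c: "[D1 * C2 + B1 * B2 + C1 * D2 = 0] (mod (D1 * D2))"
    by (auto simp: v kl_admissible_def gcd_eq_1_iff_bezout_cong)
  have "[(Y' * h) * (\<gamma> * B2) + (Z' * h) * (\<gamma> * C2) = 1] (mod D2)"
    using cong_mult[OF h YZ'] by (simp add: algebra_simps)
  moreover have "[D1 * (\<gamma> * C2) + B1 * (\<gamma> * B2) + (\<gamma> * C1) * D2 = 0] (mod (D1 * D2))"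
    using cong_scalar_left[OF c, of \<gamma>] by (simp add: algebra_simps)
  ultimately show ?thesis
    using bezout_cong_scale[OF YZ g]
    by (auto simp: v scale_unit_def kl_admissible_def gcd_eq_1_iff_bezout_cong)
qed

lemma n1_coeff_scale_unit:
  assumes "coprime \<gamma> D1" "coprime \<gamma> D2" "kl_admissible D1 D2 v"
  shows "[n1_coeff D1 D2 (scale_unit \<gamma> v) = n1_coeff D1 D2 v] (mod D1)"
proof -
  obtain B1 C1 B2 C2 where v: "v = (B1, C1, B2, C2)" by (cases v) auto
  obtain g where g: "[\<gamma> * g = 1] (mod D1)" using assms(1) cong_solve_coprime_int by blast
  from assms(3) obtain Y Z where YZ: "[Y * B1 + Z * C1 = 1] (mod D1)"
    by (auto simp: v kl_admissible_def gcd_eq_1_iff_bezout_cong)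
  have "[n1_coeff D1 D2 (scale_unit \<gamma> v) = Y * D2 - (Z * g) * (\<gamma> * B2)] (mod D1)"
    using n1_coeff_cong[OF _ bezout_cong_scale[OF YZ g]] kl_admissible_scale_unit[OF assms]
    by (simp add: v scale_unit_def)
  also have "Y * D2 - (Z * g) * (\<gamma> * B2) = Y * D2 - (Z * B2) * (\<gamma> * g)" by (simp add: ac_simps)
  also have "[\<dots> = Y * D2 - (Z * B2) * 1] (mod D1)" by (intro cong_diff cong_scalar_left cong_refl g)
  also have "[Y * D2 - (Z * B2) * 1 = n1_coeff D1 D2 v] (mod D1)"
    using n1_coeff_cong[OF _ YZ] assms(3) by (simp add: v cong_sym_eq)
  finally show ?thesis .
qed

lemma n2_coeff_scale_unit:
  assumes "coprime \<gamma> D1" "[\<gamma> * b = 1] (mod D2)" "kl_admissible D1 D2 v"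
  shows "[n2_coeff D1 D2 (scale_unit \<gamma> v) = b * n2_coeff D1 D2 v] (mod D2)"
proof -
  obtain B1 C1 B2 C2 where v: "v = (B1, C1, B2, C2)" by (cases v) auto
  have "coprime \<gamma> D2" using assms(2) coprime_iff_invertible_int by blast
  from assms(3) obtain Y Z where YZ: "[Y * B2 + Z * C2 = 1] (mod D2)"
    by (auto simp: v kl_admissible_def gcd_eq_1_iff_bezout_cong)
  have "[(Y * b) * (\<gamma> * B2) + (Z * b) * (\<gamma> * C2) = 1] (mod D2)"
    using cong_mult[OF assms(2) YZ] by (simp add: algebra_simps)
  then have "[n2_coeff D1 D2 (scale_unit \<gamma> v) = (Y * b) * D1 - (Z * b) * B1] (mod D2)"
    using n2_coeff_cong kl_admissible_scale_unit[OF assms(1) \<open>coprime \<gamma> D2\<close> assms(3)]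
    by (simp add: v scale_unit_def)
  also have "(Y * b) * D1 - (Z * b) * B1 = b * (Y * D1 - Z * B1)" by (simp add: algebra_simps)
  also have "[b * (Y * D1 - Z * B1) = b * n2_coeff D1 D2 v] (mod D2)"
    using n2_coeff_cong[OF _ YZ] assms(3) by (simp add: v cong_scalar_left cong_sym_eq)
  finally show ?thesis .
qed

lemma restricted_term_scale_unit:
  assumes "coprime \<gamma> D1" "[\<gamma> * b = 1] (mod D2)" "kl_admissible D1 D2 v"
  shows "restricted_term D1 D2 a 1 (\<gamma> * u) t (scale_unit \<gamma> v) = restricted_term D1 D2 a b u t v"
proof -
  obtain B1 C1 B2 C2 where v: "v = (B1, C1, B2, C2)" by (cases v) auto
  have "coprime \<gamma> D2" using assms(2) coprime_iff_invertible_int by blast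
  have "ee (of_int (1 * n2_coeff D1 D2 (scale_unit \<gamma> v)) / of_int D2) =
      ee (of_int (b * n2_coeff D1 D2 v) / of_int D2)"
    using n2_coeff_scale_unit[OF assms] by (simp add: ee_cong)
  moreover have "[\<gamma> * B2 = \<gamma> * u] (mod D2) \<longleftrightarrow> [B2 = u] (mod D2)"
    using \<open>coprime \<gamma> D2\<close> by (rule cong_mult_lcancel)
  moreover have "[n1_coeff D1 D2 (scale_unit \<gamma> v) = t] (mod D1) \<longleftrightarrow> [n1_coeff D1 D2 v = t] (mod D1)"
    using n1_coeff_scale_unit[OF assms(1) \<open>coprime \<gamma> D2\<close> assms(3)] by (meson cong_sym cong_trans)
  ultimately show ?thesis
    by (simp only: restricted_term_def scale_unit_def v prod.case)
qed

lemma inj_on_reduce_scale_unit: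
  assumes "coprime \<gamma> D1" "coprime \<gamma> D2"
  shows "inj_on (\<lambda>v. reduce D1 D2 (scale_unit \<gamma> v)) (residue_box D1 D2)"
proof (rule inj_onI)
  fix v w assume v: "v \<in> residue_box D1 D2" and w: "w \<in> residue_box D1 D2"
    and eq: "reduce D1 D2 (scale_unit \<gamma> v) = reduce D1 D2 (scale_unit \<gamma> w)"
  obtain B1 C1 B2 C2 B1' C1' B2' C2' where vw: "v = (B1, C1, B2, C2)" "w = (B1', C1', B2', C2')"
    by (cases v, cases w) auto
  have box: "B1 \<in> {0..<D1}" "B1' \<in> {0..<D1}" "C1 \<in> {0..<D1}" "C1' \<in> {0..<D1}"
    "B2 \<in> {0..<D2}" "B2' \<in> {0..<D2}" "C2 \<in> {0..<D2}" "C2' \<in> {0..<D2}"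
    using v w by (auto simp: vw residue_box_def)
  then have "D1 > 0" "D2 > 0" by auto
  then have "shift_equiv D1 D2 (scale_unit \<gamma> v) (scale_unit \<gamma> w)" using eq
    by (simp add: reduce_eq_iff)
  then obtain k l where kl: "B1' = B1 + D1 * k" "\<gamma> * B2' = \<gamma> * B2 + D2 * l"
    "[\<gamma> * C1' = \<gamma> * C1 - l * B1] (mod D1)" "[\<gamma> * C2' = \<gamma> * C2 - k * (\<gamma> * B2)] (mod D2)"
    by (auto simp: vw scale_unit_def shift_equiv_def)
  have "[B1' = B1] (mod D1)" "[\<gamma> * B2' = \<gamma> * B2] (mod D2)" unfolding kl(1,2)
    by (rule cong_add_mult_self)+
  then have B: "B1' = B1" "B2' = B2"
    using box cong_mult_lcancel[OF assms(2)] by (auto intro: cong_less_imp_eq_int)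
  then have "k = 0" "l = 0" using kl(1,2) \<open>D1 > 0\<close> \<open>D2 > 0\<close> by auto
  then have "[\<gamma> * C1' = \<gamma> * C1] (mod D1)" "[\<gamma> * C2' = \<gamma> * C2] (mod D2)" using kl(3,4) by simp_all
  then have "C1' = C1" "C2' = C2"
    using box cong_mult_lcancel[OF assms(1)] cong_mult_lcancel[OF assms(2)]
    by (auto intro: cong_less_imp_eq_int)
  then show "v = w" by (simp add: vw B)
qed

lemma restricted_kl_unit_twist:
  assumes "D1 > 0" "D2 > 0" "coprime \<gamma> D1" "[\<gamma> * b = 1] (mod D2)"
  shows "restricted_kl D1 D2 a b u t = restricted_kl D1 D2 a 1 (\<gamma> * u) t"
proof -
  define \<psi> where "\<psi> v = reduce D1 D2 (scale_unit \<gamma> v)" for v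
  have "coprime \<gamma> D2" using assms(4) coprime_iff_invertible_int by blast
  have "\<psi> v \<in> kl_set D1 D2" if "v \<in> kl_set D1 D2" for v
    unfolding \<psi>_def using that
    by (intro reduce_in_kl_set[OF assms(1,2)] kl_admissible_scale_unit[OF assms(3) \<open>coprime \<gamma> D2\<close>])
      (simp add: kl_set_def)
  then have into: "\<psi> ` kl_set D1 D2 \<subseteq> kl_set D1 D2" by blast
  have "inj_on \<psi> (kl_set D1 D2)"
    using inj_on_reduce_scale_unit[OF assms(3) \<open>coprime \<gamma> D2\<close>] unfolding \<psi>_def kl_set_def
    by (rule inj_on_subset) auto
  then have bij: "bij_betw \<psi> (kl_set D1 D2) (kl_set D1 D2)"
    using endo_inj_surj[OF finite_kl_set into] into by (simp add: bij_betw_def)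
  have "restricted_kl D1 D2 a b u t = (\<Sum>v\<in>kl_set D1 D2. restricted_term D1 D2 a 1 (\<gamma> * u) t (\<psi> v))"
    unfolding restricted_kl_def \<psi>_def
    using restricted_term_scale_unit[OF assms(3,4)] restricted_term_reduce
      kl_admissible_scale_unit[OF assms(3) \<open>coprime \<gamma> D2\<close>]
    by (intro sum.cong) (auto simp: kl_set_def)
  also have "\<dots> = restricted_kl D1 D2 a 1 (\<gamma> * u) t"
    unfolding restricted_kl_def by (rule sum.reindex_bij_betw[OF bij])
  finally show ?thesis .
qed

lemma restricted_l1_unit_twist:
  assumes "D1 > 0" "D2 > 0" "coprime b D2"
  shows "restricted_l1 D1 D2 a b t = restricted_l1 D1 D2 a 1 t"
proof -
  obtain g where g: "[b * g = 1] (mod D2)" using assms(3) cong_solve_coprime_int by blast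
  then have "coprime g D2" by (metis coprime_iff_invertible_int mult.commute)
  \<comment> \<open>\<open>\<gamma>\<close> also rescales \<open>C1\<close>, so it must be a unit modulo \<open>D1\<close> as well.\<close>
  then obtain \<gamma> where \<gamma>: "[\<gamma> = g] (mod D2)" "coprime \<gamma> D1"
    using cong_lift_coprime[of g D2 D1] assms(1) by auto
  have "[\<gamma> * b = g * b] (mod D2)" using \<gamma>(1) by (rule cong_scalar_right)
  then have \<gamma>b: "[\<gamma> * b = 1] (mod D2)" using g by (simp add: mult.commute cong_trans)
  then have "coprime \<gamma> D2" using coprime_iff_invertible_int by blast
  have "restricted_l1 D1 D2 a b t = (\<Sum>u\<in>{0..<D2}. cmod (restricted_kl D1 D2 a 1 (\<gamma> * u) t))"
    unfolding restricted_l1_def using restricted_kl_unit_twist[OF assms(1,2) \<gamma>(2) \<gamma>b] by simp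
  also have "\<dots> = restricted_l1 D1 D2 a 1 t"
    unfolding restricted_l1_def using restricted_kl_cong[OF cong_refl cong_refl _ cong_refl]
    by (intro sum_periodic_mult_unit[OF assms(2) \<open>coprime \<gamma> D2\<close>]) simp
  finally show ?thesis .
qed


section \<open>The values of \<open>\<R>\<close>\<close>

definition calR_values :: "int \<Rightarrow> int \<Rightarrow> int \<Rightarrow> real set" where
  "calR_values t D1 D2 = (\<lambda>(a, b). restricted_l1 D1 D2 a 1 (b * t)) ` {(a, b). coprime (a * b) D1}"

lemma calR_eq_Sup_calR_values:
  assumes "D1 > 0" "D2 > 0"
  shows "calR t D1 D2 = Sup (calR_values t D1 D2)"
  unfolding calR_def calR_values_def restricted_l1_def
  by (simp add: kl3_hat_eq_restricted_kl[OF assms])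

lemma finite_calR_values:
  assumes "D1 > 0"
  shows "finite (calR_values t D1 D2)"
proof -
  have "calR_values t D1 D2 \<subseteq> (\<lambda>(a, b). restricted_l1 D1 D2 a 1 (b * t)) ` ({0..<D1} \<times> {0..<D1})"
  proof
    fix x assume "x \<in> calR_values t D1 D2"
    then obtain a b where "x = restricted_l1 D1 D2 a 1 (b * t)" by (auto simp: calR_values_def)
    also have "\<dots> = restricted_l1 D1 D2 (a mod D1) 1 ((b mod D1) * t)"
      by (intro restricted_l1_cong) (simp_all add: cong_scalar_right)
    finally show "x \<in> (\<lambda>(a, b). restricted_l1 D1 D2 a 1 (b * t)) ` ({0..<D1} \<times> {0..<D1})"
      using assms by (auto intro: rev_image_eqI[of "(a mod D1, b mod D1)"])
  qed
  then show ?thesis by (rule finite_subset) simp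
qed

lemma calR_values_nonneg: "x \<in> calR_values t D1 D2 \<Longrightarrow> 0 \<le> x"
  by (auto simp: calR_values_def restricted_l1_def intro: sum_nonneg)

lemma calR_values_nonempty: "calR_values t D1 D2 \<noteq> {}"
  by (auto simp: calR_values_def intro: exI[of _ 1])

lemma Sup_times_nonneg:
  fixes A B :: "real set"
  assumes "finite A" "finite B" "A \<noteq> {}" "B \<noteq> {}" "\<And>x. x \<in> A \<Longrightarrow> 0 \<le> x" "\<And>y. y \<in> B \<Longrightarrow> 0 \<le> y"
  shows "Sup {x * y | x y. x \<in> A \<and> y \<in> B} = Sup A * Sup B"
proof -
  have AB: "{x * y | x y. x \<in> A \<and> y \<in> B} = (\<lambda>(x, y). x * y) ` (A \<times> B)" by auto
  have "Max {x * y | x y. x \<in> A \<and> y \<in> B} = Max A * Max B"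
  proof (rule Max_eqI)
    show "finite {x * y | x y. x \<in> A \<and> y \<in> B}" using assms(1,2) by (simp add: AB)
    show "Max A * Max B \<in> {x * y | x y. x \<in> A \<and> y \<in> B}" using assms(1-4) Max_in by blast
    fix z assume "z \<in> {x * y | x y. x \<in> A \<and> y \<in> B}"
    then obtain x y where "z = x * y" "x \<in> A" "y \<in> B" by blast
    then show "z \<le> Max A * Max B"
      using assms by (simp add: mult_mono)
  qed
  moreover have "{x * y | x y. x \<in> A \<and> y \<in> B} \<noteq> {}" using assms(3,4) by blast
  ultimately show ?thesis using assms(1-4) by (simp add: AB cSup_eq_Max)
qed


section \<open>Twisted multiplicativity\<close>

text \<open>Since \<open>(c1 * e1) * C2 + B1 * B2 + C1 * (c2 * e2) = c1 * (e1 * C2) + B1 * B2 + (e2 * C1) * c2\<close>,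
  this turns an index for the moduli \<open>(c1 * e1, c2 * e2)\<close> into one for \<open>(c1, c2)\<close>.\<close>

definition crt_proj :: "int \<Rightarrow> int \<Rightarrow> kl_index \<Rightarrow> kl_index" where
  "crt_proj e1 e2 = (\<lambda>(B1, C1, B2, C2). (B1, e2 * C1, B2, e1 * C2))"

lemma kl_admissible_crt_proj:
  assumes "kl_admissible (c1 * e1) (c2 * e2) v" "coprime e2 c1" "coprime e1 c2"
  shows "kl_admissible c1 c2 (crt_proj e1 e2 v)"
proof -
  obtain B1 C1 B2 C2 where v: "v = (B1, C1, B2, C2)" by (cases v) auto
  obtain i j where i: "[e2 * i = 1] (mod c1)" and j: "[e1 * j = 1] (mod c2)"
    using assms(2,3) cong_solve_coprime_int by blast
  from assms(1) obtain Y Z Y' Z' where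
    YZ: "[Y * B1 + Z * C1 = 1] (mod (c1 * e1))" "[Y' * B2 + Z' * C2 = 1] (mod (c2 * e2))"
    and c: "[(c1 * e1) * C2 + B1 * B2 + C1 * (c2 * e2) = 0] (mod ((c1 * e1) * (c2 * e2)))"
    by (auto simp: v kl_admissible_def gcd_eq_1_iff_bezout_cong)
  have "gcd (gcd B1 (e2 * C1)) c1 = 1" "gcd (gcd B2 (e1 * C2)) c2 = 1"
    using bezout_cong_scale[OF cong_modulus_mult[OF YZ(1)] i]
      bezout_cong_scale[OF cong_modulus_mult[OF YZ(2)] j]
    by (meson gcd_eq_1_iff_bezout_cong)+
  moreover have "[c1 * (e1 * C2) + B1 * B2 + (e2 * C1) * c2 = 0] (mod (c1 * c2))"
    using cong_dvd_modulus[OF c, of "c1 * c2"] by (simp add: mult_dvd_mono ac_simps)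
  ultimately show ?thesis by (simp add: v crt_proj_def kl_admissible_def)
qed

lemma n1_coeff_crt_proj:
  assumes "kl_admissible (c1 * e1) (c2 * e2) v" "coprime e2 c1" "coprime e1 c2"
  shows "[n1_coeff (c1 * e1) (c2 * e2) v = e2 * n1_coeff c1 c2 (crt_proj e1 e2 v)] (mod c1)"
proof -
  obtain B1 C1 B2 C2 where v: "v = (B1, C1, B2, C2)" by (cases v) auto
  obtain i where i: "[e2 * i = 1] (mod c1)" using assms(2) cong_solve_coprime_int by blast
  from assms(1) obtain Y Z where YZ: "[Y * B1 + Z * C1 = 1] (mod (c1 * e1))"
    by (auto simp: v kl_admissible_def gcd_eq_1_iff_bezout_cong)
  have YZ': "[Y * B1 + (Z * i) * (e2 * C1) = 1] (mod c1)"
    using bezout_cong_scale[OF cong_modulus_mult[OF YZ] i] .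
  have "[n1_coeff (c1 * e1) (c2 * e2) v = Y * (c2 * e2) - Z * B2] (mod c1)"
    using cong_modulus_mult[OF n1_coeff_cong[OF _ YZ]] assms(1) by (simp add: v)
  also have "Y * (c2 * e2) - Z * B2 = e2 * (Y * c2 - (Z * i) * B2) + Z * B2 * (e2 * i - 1)"
    by (simp add: algebra_simps)
  also have "[\<dots> = e2 * (Y * c2 - (Z * i) * B2) + Z * B2 * 0] (mod c1)"
    using i by (intro cong_add cong_scalar_left cong_refl) (simp add: cong_iff_dvd_diff)
  also have "[e2 * (Y * c2 - (Z * i) * B2) + Z * B2 * 0
      = e2 * n1_coeff c1 c2 (crt_proj e1 e2 v)] (mod c1)"
    using n1_coeff_cong[OF _ YZ'] kl_admissible_crt_proj[OF assms]
    by (simp add: v crt_proj_def cong_scalar_left cong_sym_eq)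
  finally show ?thesis .
qed

lemma n2_coeff_crt_proj:
  assumes "kl_admissible (c1 * e1) (c2 * e2) v" "coprime e2 c1" "coprime e1 c2"
  shows "[n2_coeff (c1 * e1) (c2 * e2) v = e1 * n2_coeff c1 c2 (crt_proj e1 e2 v)] (mod c2)"
proof -
  have "swap_index (crt_proj e1 e2 v) = crt_proj e2 e1 (swap_index v)"
    by (cases v) (simp add: swap_index_def crt_proj_def)
  then show ?thesis
    using n1_coeff_crt_proj[of c2 e2 c1 e1 "swap_index v"] assms
    by (simp add: n2_coeff_def kl_admissible_swap)
qed

definition crt_split :: "int \<Rightarrow> int \<Rightarrow> int \<Rightarrow> int \<Rightarrow> kl_index \<Rightarrow> kl_index \<times> kl_index" where
  "crt_split c1 c2 e1 e2 v = (reduce c1 c2 (crt_proj e1 e2 v), reduce e1 e2 (crt_proj c1 c2 v))"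

context
  fixes c1 c2 e1 e2 :: int
  assumes pos: "c1 > 0" "c2 > 0" "e1 > 0" "e2 > 0" and coprime_ce: "coprime (c1 * c2) (e1 * e2)"
begin

lemma coprime_crt_factors:
  "coprime c1 e1" "coprime c1 e2" "coprime c2 e1" "coprime c2 e2"
  "coprime e1 c1" "coprime e2 c1" "coprime e1 c2" "coprime e2 c2"
  using coprime_ce by (auto simp: coprime_commute)

lemma crt_parameters:
  obtains p1 q1 p2 q2 i1 j1 where "p1 * e1 + q1 * c1 = 1" "p2 * e2 + q2 * c2 = 1"
    "[e2 * i1 = 1] (mod c1)" "[c2 * j1 = 1] (mod e1)"
proof -
  obtain p1 q1 p2 q2 where "p1 * e1 + q1 * c1 = 1" "p2 * e2 + q2 * c2 = 1"
    using bezout_int[of e1 c1] bezout_int[of e2 c2] coprime_crt_factors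
    by (auto simp: coprime_iff_gcd_eq_1)
  moreover obtain i1 j1 where "[e2 * i1 = 1] (mod c1)" "[c2 * j1 = 1] (mod e1)"
    using cong_solve_coprime_int[OF coprime_crt_factors(6)]
      cong_solve_coprime_int[OF coprime_crt_factors(3)] by blast
  ultimately show ?thesis using that by blast
qed

lemma restricted_term_crt:
  assumes adm: "kl_admissible (c1 * e1) (c2 * e2) v"
    and bez1: "p1 * e1 + q1 * c1 = 1" and bez2: "p2 * e2 + q2 * c2 = 1"
    and i1: "[e2 * i1 = 1] (mod c1)" and j1: "[c2 * j1 = 1] (mod e1)"
  shows "restricted_term (c1 * e1) (c2 * e2) a b u t v =
    restricted_term c1 c2 (a * p1) (b * p2 * e1) u (i1 * t) (crt_proj e1 e2 v) *
    restricted_term e1 e2 (a * q1) (b * q2 * c1) u (j1 * t) (crt_proj c1 c2 v)"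
proof -
  obtain B1 C1 B2 C2 where v: "v = (B1, C1, B2, C2)" by (cases v) auto
  define n1 n2 where "n1 = n1_coeff (c1 * e1) (c2 * e2) v" and "n2 = n2_coeff (c1 * e1) (c2 * e2) v"
  define n1c n2c where "n1c = n1_coeff c1 c2 (crt_proj e1 e2 v)" and
    "n2c = n2_coeff c1 c2 (crt_proj e1 e2 v)"
  define n1e n2e where "n1e = n1_coeff e1 e2 (crt_proj c1 c2 v)" and
    "n2e = n2_coeff e1 e2 (crt_proj c1 c2 v)"
  have adm': "kl_admissible (e1 * c1) (e2 * c2) v" using adm by (simp add: mult.commute)
  have nc: "[n1 = e2 * n1c] (mod c1)" "[n2 = e1 * n2c] (mod c2)"
    unfolding n1_def n2_def n1c_def n2c_def
    using n1_coeff_crt_proj[OF adm] n2_coeff_crt_proj[OF adm] coprime_crt_factors by simp_all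
  have ne: "[n1 = c2 * n1e] (mod e1)" "[n2 = c1 * n2e] (mod e2)"
    unfolding n1_def n2_def n1e_def n2e_def
    using n1_coeff_crt_proj[OF adm'] n2_coeff_crt_proj[OF adm'] coprime_crt_factors
    by (simp_all add: mult.commute)
  have "[n1 = t] (mod c1) \<longleftrightarrow> [e2 * n1c = t] (mod c1)" "[n1 = t] (mod e1) \<longleftrightarrow> [c2 * n1e = t] (mod e1)"
    using nc(1) ne(1) by (meson cong_sym cong_trans)+
  then have n1_iff: "[n1 = t] (mod c1 * e1) \<longleftrightarrow> [n1c = i1 * t] (mod c1) \<and> [n1e = j1 * t] (mod e1)"
    using cong_mult_inverse_iff[OF i1] cong_mult_inverse_iff[OF j1] coprime_crt_factors
    by (simp add: coprime_cong_mult_iff)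
  have n2c: "[p2 * (b * n2) = b * p2 * e1 * n2c] (mod c2)"
    using cong_scalar_left[OF nc(2), of "b * p2"] by (simp add: ac_simps)
  have n2e: "[q2 * (b * n2) = b * q2 * c1 * n2e] (mod e2)"
    using cong_scalar_left[OF ne(2), of "b * q2"] by (simp add: ac_simps)
  have "ee (of_int (b * n2) / of_int (c2 * e2)) =
      ee (of_int (b * p2 * e1 * n2c) / of_int c2) * ee (of_int (b * q2 * c1 * n2e) / of_int e2)"
    using ee_crt_split[OF bez2, of "b * n2"] ee_cong[OF n2c] ee_cong[OF n2e] pos by simp
  moreover have "ee (of_int (a * B1) / of_int (c1 * e1)) =
      ee (of_int (a * p1 * B1) / of_int c1) * ee (of_int (a * q1 * B1) / of_int e1)"
    using ee_crt_split[OF bez1, of "a * B1"] pos by (simp add: ac_simps)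
  moreover have "[B2 = u] (mod c2 * e2) \<longleftrightarrow> [B2 = u] (mod c2) \<and> [B2 = u] (mod e2)"
    using coprime_crt_factors by (simp add: coprime_cong_mult_iff)
  ultimately show ?thesis
    using n1_iff unfolding n1_def n2_def n1c_def n2c_def n1e_def n2e_def
    by (simp add: restricted_term_def v crt_proj_def ac_simps)
qed

lemma crt_split_in_kl_set:
  assumes "v \<in> kl_set (c1 * e1) (c2 * e2)"
  shows "crt_split c1 c2 e1 e2 v \<in> kl_set c1 c2 \<times> kl_set e1 e2"
proof -
  have "kl_admissible (c1 * e1) (c2 * e2) v" "kl_admissible (e1 * c1) (e2 * c2) v"
    using assms by (simp_all add: kl_set_def mult.commute)
  then show ?thesis
    using kl_admissible_crt_proj coprime_crt_factors reduce_in_kl_set pos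
    by (simp add: crt_split_def)
qed

lemma inj_on_crt_split: "inj_on (crt_split c1 c2 e1 e2) (kl_set (c1 * e1) (c2 * e2))"
proof (rule inj_onI)
  fix v w assume v: "v \<in> kl_set (c1 * e1) (c2 * e2)" and w: "w \<in> kl_set (c1 * e1) (c2 * e2)"
    and eq: "crt_split c1 c2 e1 e2 v = crt_split c1 c2 e1 e2 w"
  obtain B1 C1 B2 C2 B1' C1' B2' C2' where vw: "v = (B1, C1, B2, C2)" "w = (B1', C1', B2', C2')"
    by (cases v, cases w) auto
  have box: "B1 \<in> {0..<c1 * e1}" "B1' \<in> {0..<c1 * e1}" "C1 \<in> {0..<c1 * e1}" "C1' \<in> {0..<c1 * e1}"
    "B2 \<in> {0..<c2 * e2}" "B2' \<in> {0..<c2 * e2}" "C2 \<in> {0..<c2 * e2}" "C2' \<in> {0..<c2 * e2}"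
    using v w by (auto simp: vw kl_set_def residue_box_def)
  have "shift_equiv c1 c2 (crt_proj e1 e2 v) (crt_proj e1 e2 w)"
    "shift_equiv e1 e2 (crt_proj c1 c2 v) (crt_proj c1 c2 w)"
    using eq pos by (simp_all add: crt_split_def reduce_eq_iff)
  then obtain k l k' l' where
    c: "B1' = B1 + c1 * k" "B2' = B2 + c2 * l"
      "[e2 * C1' = e2 * C1 - l * B1] (mod c1)" "[e1 * C2' = e1 * C2 - k * B2] (mod c2)" and
    e: "B1' = B1 + e1 * k'" "B2' = B2 + e2 * l'"
      "[c2 * C1' = c2 * C1 - l' * B1] (mod e1)" "[c1 * C2' = c1 * C2 - k' * B2] (mod e2)"
    unfolding vw crt_proj_def shift_equiv_def prod.case by blast
  have "[B1' = B1] (mod c1)" "[B2' = B2] (mod c2)" unfolding c(1,2) by (rule cong_add_mult_self)+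
  moreover have "[B1' = B1] (mod e1)" "[B2' = B2] (mod e2)" unfolding e(1,2)
    by (rule cong_add_mult_self)+
  ultimately have B: "B1' = B1" "B2' = B2"
    using box coprime_crt_factors by (auto intro: cong_coprime_box_eq)
  then have "k = 0" "l = 0" "k' = 0" "l' = 0" using c(1,2) e(1,2) pos by auto
  then have "[C1' = C1] (mod c1)" "[C1' = C1] (mod e1)" "[C2' = C2] (mod c2)" "[C2' = C2] (mod e2)"
    using c(3,4) e(3,4) coprime_crt_factors by (simp_all add: cong_mult_lcancel)
  then have "C1' = C1" "C2' = C2"
    using box coprime_crt_factors by (auto intro: cong_coprime_box_eq)
  then show "v = w" by (simp add: vw B)
qed

lemma kl_admissible_of_crt_proj:
  assumes "kl_admissible c1 c2 (crt_proj e1 e2 w)" "kl_admissible e1 e2 (crt_proj c1 c2 w)"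
  shows "kl_admissible (c1 * e1) (c2 * e2) w"
proof -
  obtain B1 C1 B2 C2 where w: "w = (B1, C1, B2, C2)" by (cases w) auto
  have "gcd (gcd B1 (e2 * C1)) c1 = 1" "gcd (gcd B2 (e1 * C2)) c2 = 1"
    "gcd (gcd B1 (c2 * C1)) e1 = 1" "gcd (gcd B2 (c1 * C2)) e2 = 1"
    using assms by (simp_all add: w crt_proj_def kl_admissible_def)
  then have "coprime (gcd B1 C1) (c1 * e1)" "coprime (gcd B2 C2) (c2 * e2)"
    unfolding coprime_iff_gcd_eq_1[symmetric] by (blast intro: coprime_gcd_mult_modulus)+
  then have "gcd (gcd B1 C1) (c1 * e1) = 1" "gcd (gcd B2 C2) (c2 * e2) = 1"
    by (simp_all only: coprime_iff_gcd_eq_1)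
  moreover have "[c1 * (e1 * C2) + B1 * B2 + (e2 * C1) * c2 = 0] (mod (c1 * c2))"
    "[e1 * (c1 * C2) + B1 * B2 + (c2 * C1) * e2 = 0] (mod (e1 * e2))"
    using assms by (simp_all add: w crt_proj_def kl_admissible_def)
  then have "[(c1 * e1) * C2 + B1 * B2 + C1 * (c2 * e2) = 0] (mod (c1 * c2))"
    "[(c1 * e1) * C2 + B1 * B2 + C1 * (c2 * e2) = 0] (mod (e1 * e2))"
    by (simp_all add: ac_simps)
  then have "[(c1 * e1) * C2 + B1 * B2 + C1 * (c2 * e2) = 0] (mod ((c1 * c2) * (e1 * e2)))"
    using coprime_cong_mult_iff[OF coprime_ce] by blast
  moreover have "(c1 * c2) * (e1 * e2) = (c1 * e1) * (c2 * e2)" by (simp add: ac_simps)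
  ultimately show ?thesis by (simp add: w kl_admissible_def)
qed

lemma crt_split_surj:
  assumes \<sigma>: "\<sigma> \<in> kl_set c1 c2" and \<rho>: "\<rho> \<in> kl_set e1 e2"
  shows "(\<sigma>, \<rho>) \<in> crt_split c1 c2 e1 e2 ` kl_set (c1 * e1) (c2 * e2)"
proof -
  obtain b1 d1 b2 d2 b1' d1' b2' d2' where \<sigma>\<rho>: "\<sigma> = (b1, d1, b2, d2)" "\<rho> = (b1', d1', b2', d2')"
    by (cases \<sigma>, cases \<rho>) auto
  obtain B1 where B1: "B1 \<in> {0..<c1 * e1}" "[B1 = b1] (mod c1)" "[B1 = b1'] (mod e1)"
    by (rule binary_chinese_remainder_box[OF pos(1,3) coprime_crt_factors(1)])
  obtain B2 where B2: "B2 \<in> {0..<c2 * e2}" "[B2 = b2] (mod c2)" "[B2 = b2'] (mod e2)"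
    by (rule binary_chinese_remainder_box[OF pos(2,4) coprime_crt_factors(4)])
  obtain k l k' l' where kl: "b1 = B1 + c1 * k" "b2 = B2 + c2 * l" "b1' = B1 + e1 * k'"
    "b2' = B2 + e2 * l'"
    using B1(2,3) B2(2,3) unfolding cong_iff_lin by blast
  obtain i1 j1 i2 j2 where inv: "[e2 * i1 = 1] (mod c1)" "[c2 * j1 = 1] (mod e1)"
    "[e1 * i2 = 1] (mod c2)" "[c1 * j2 = 1] (mod e2)"
    using cong_solve_coprime_int[OF coprime_crt_factors(6)]
      cong_solve_coprime_int[OF coprime_crt_factors(3)]
      cong_solve_coprime_int[OF coprime_crt_factors(7)]
      cong_solve_coprime_int[OF coprime_crt_factors(2)]
    by blast
  obtain C1 where C1: "C1 \<in> {0..<c1 * e1}" "[C1 = i1 * (d1 + l * B1)] (mod c1)"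
    "[C1 = j1 * (d1' + l' * B1)] (mod e1)"
    by (rule binary_chinese_remainder_box[OF pos(1,3) coprime_crt_factors(1)])
  obtain C2 where C2: "C2 \<in> {0..<c2 * e2}" "[C2 = i2 * (d2 + k * B2)] (mod c2)"
    "[C2 = j2 * (d2' + k' * B2)] (mod e2)"
    by (rule binary_chinese_remainder_box[OF pos(2,4) coprime_crt_factors(4)])
  define w where "w = (B1, C1, B2, C2)"
  have sc: "shift_equiv c1 c2 (crt_proj e1 e2 w) \<sigma>"
    unfolding w_def \<sigma>\<rho> crt_proj_def shift_equiv_def prod.case
    using kl cong_inverse_shift[OF inv(1) C1(2)] cong_inverse_shift[OF inv(3) C2(2)] by blast
  have se: "shift_equiv e1 e2 (crt_proj c1 c2 w) \<rho>"
    unfolding w_def \<sigma>\<rho> crt_proj_def shift_equiv_def prod.case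
    using kl cong_inverse_shift[OF inv(2) C1(3)] cong_inverse_shift[OF inv(4) C2(3)] by blast
  have \<sigma>\<rho>_in: "\<sigma> \<in> residue_box c1 c2" "kl_admissible c1 c2 \<sigma>" "\<rho> \<in> residue_box e1 e2"
    "kl_admissible e1 e2 \<rho>"
    using \<sigma> \<rho> by (simp_all add: kl_set_def)
  have c: "kl_admissible c1 c2 (crt_proj e1 e2 w)" "reduce c1 c2 (crt_proj e1 e2 w) = \<sigma>"
    using kl_admissible_shift[OF \<sigma>\<rho>_in(2) shift_equiv_sym[OF sc]]
      reduce_eq_of_shift_equiv[OF pos(1,2) \<sigma>\<rho>_in(1) sc] .
  have e: "kl_admissible e1 e2 (crt_proj c1 c2 w)" "reduce e1 e2 (crt_proj c1 c2 w) = \<rho>"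
    using kl_admissible_shift[OF \<sigma>\<rho>_in(4) shift_equiv_sym[OF se]]
      reduce_eq_of_shift_equiv[OF pos(3,4) \<sigma>\<rho>_in(3) se] .
  have "w \<in> kl_set (c1 * e1) (c2 * e2)"
    using kl_admissible_of_crt_proj[OF c(1) e(1)] B1(1) B2(1) C1(1) C2(1)
    by (simp add: w_def kl_set_def residue_box_def)
  moreover have "crt_split c1 c2 e1 e2 w = (\<sigma>, \<rho>)" using c(2) e(2) by (simp add: crt_split_def)
  ultimately show ?thesis by (metis image_eqI)
qed

lemma bij_betw_crt_split:
  "bij_betw (crt_split c1 c2 e1 e2) (kl_set (c1 * e1) (c2 * e2)) (kl_set c1 c2 \<times> kl_set e1 e2)"
  unfolding bij_betw_def
proof (intro conjI inj_on_crt_split equalityI subsetI)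
  show "x \<in> kl_set c1 c2 \<times> kl_set e1 e2" if
    "x \<in> crt_split c1 c2 e1 e2 ` kl_set (c1 * e1) (c2 * e2)" for x
    using that crt_split_in_kl_set by blast
  show "x \<in> crt_split c1 c2 e1 e2 ` kl_set (c1 * e1) (c2 * e2)" if
    "x \<in> kl_set c1 c2 \<times> kl_set e1 e2" for x
    using that crt_split_surj by (cases x) simp
qed

lemma restricted_kl_crt:
  assumes "p1 * e1 + q1 * c1 = 1" "p2 * e2 + q2 * c2 = 1" "[e2 * i1 = 1] (mod c1)"
    "[c2 * j1 = 1] (mod e1)"
  shows "restricted_kl (c1 * e1) (c2 * e2) a b u t =
    restricted_kl c1 c2 (a * p1) (b * p2 * e1) u (i1 * t) *
    restricted_kl e1 e2 (a * q1) (b * q2 * c1) u (j1 * t)"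
proof -
  define f where "f = (\<lambda>(x, y). restricted_term c1 c2 (a * p1) (b * p2 * e1) u (i1 * t) x *
    restricted_term e1 e2 (a * q1) (b * q2 * c1) u (j1 * t) y)"
  have "restricted_term (c1 * e1) (c2 * e2) a b u t v = f (crt_split c1 c2 e1 e2 v)"
    if "v \<in> kl_set (c1 * e1) (c2 * e2)" for v
  proof -
    have "kl_admissible (c1 * e1) (c2 * e2) v" "kl_admissible (e1 * c1) (e2 * c2) v"
      using that by (simp_all add: kl_set_def mult.commute)
    then show ?thesis
      using restricted_term_crt[OF _ assms] restricted_term_reduce kl_admissible_crt_proj
        coprime_crt_factors
      by (simp add: f_def crt_split_def)
  qed
  then have "restricted_kl (c1 * e1) (c2 * e2) a b u t
      = (\<Sum>v\<in>kl_set (c1 * e1) (c2 * e2). f (crt_split c1 c2 e1 e2 v))"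
    by (simp add: restricted_kl_def)
  also have "\<dots> = (\<Sum>z\<in>kl_set c1 c2 \<times> kl_set e1 e2. f z)"
    by (rule sum.reindex_bij_betw[OF bij_betw_crt_split])
  also have "\<dots> = restricted_kl c1 c2 (a * p1) (b * p2 * e1) u (i1 * t) *
      restricted_kl e1 e2 (a * q1) (b * q2 * c1) u (j1 * t)"
    by (simp add: f_def restricted_kl_def sum_product sum.cartesian_product)
  finally show ?thesis .
qed

lemma restricted_l1_crt:
  assumes "p1 * e1 + q1 * c1 = 1" "p2 * e2 + q2 * c2 = 1" "[e2 * i1 = 1] (mod c1)"
    "[c2 * j1 = 1] (mod e1)"
  shows "restricted_l1 (c1 * e1) (c2 * e2) a b t =
    restricted_l1 c1 c2 (a * p1) (b * p2 * e1) (i1 * t) *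
    restricted_l1 e1 e2 (a * q1) (b * q2 * c1) (j1 * t)"
proof -
  define gc where "gc u = cmod (restricted_kl c1 c2 (a * p1) (b * p2 * e1) u (i1 * t))" for u
  define ge where "ge u = cmod (restricted_kl e1 e2 (a * q1) (b * q2 * c1) u (j1 * t))" for u
  have "cmod (restricted_kl (c1 * e1) (c2 * e2) a b u t) = gc (u mod c2) * ge (u mod e2)" for u
    using restricted_kl_cong[OF cong_refl cong_refl cong_mod_rightI[OF cong_refl] cong_refl]
    by (simp add: restricted_kl_crt[OF assms] gc_def ge_def norm_mult)
  then have "restricted_l1 (c1 * e1) (c2 * e2) a b t =
      (\<Sum>u\<in>{0..<c2 * e2}. (\<lambda>(x, y). gc x * ge y) (u mod c2, u mod e2))"
    by (simp add: restricted_l1_def)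
  also have "\<dots> = (\<Sum>z\<in>{0..<c2} \<times> {0..<e2}. (\<lambda>(x, y). gc x * ge y) z)"
    using bij_betw_mod_pair[OF pos(2,4) coprime_crt_factors(4)] by (rule sum.reindex_bij_betw)
  also have "\<dots> = restricted_l1 c1 c2 (a * p1) (b * p2 * e1) (i1 * t) *
      restricted_l1 e1 e2 (a * q1) (b * q2 * c1) (j1 * t)"
    by (simp add: restricted_l1_def gc_def ge_def sum_product sum.cartesian_product)
  finally show ?thesis .
qed

lemma restricted_l1_crt_unit:
  assumes "p1 * e1 + q1 * c1 = 1" "p2 * e2 + q2 * c2 = 1" "[e2 * i1 = 1] (mod c1)"
    "[c2 * j1 = 1] (mod e1)"
  shows "restricted_l1 (c1 * e1) (c2 * e2) a 1 t =
    restricted_l1 c1 c2 (a * p1) 1 (i1 * t) * restricted_l1 e1 e2 (a * q1) 1 (j1 * t)"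
proof -
  have "[p2 * e2 = 1] (mod c2)" "[q2 * c2 = 1] (mod e2)"
    using bezout_imp_cong[OF assms(2)] bezout_imp_cong[of q2 c2 p2 e2] assms(2)
    by (simp_all add: ac_simps)
  then have "coprime p2 c2" "coprime q2 e2"
    using coprime_iff_invertible_int[of p2 c2] coprime_iff_invertible_int[of q2 e2] by blast+
  then have "coprime (p2 * e1) c2" "coprime (q2 * c1) e2"
    using coprime_crt_factors(2,7) by simp_all
  then have "restricted_l1 c1 c2 (a * p1) (p2 * e1) (i1 * t)
      = restricted_l1 c1 c2 (a * p1) 1 (i1 * t)"
    "restricted_l1 e1 e2 (a * q1) (q2 * c1) (j1 * t) = restricted_l1 e1 e2 (a * q1) 1 (j1 * t)"
    using restricted_l1_unit_twist pos by blast+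
  then show ?thesis using restricted_l1_crt[OF assms, of a 1 t] by simp
qed

lemma calR_values_mult_subset:
  "calR_values t (c1 * e1) (c2 * e2) \<subseteq>
    {x * y | x y. x \<in> calR_values t c1 c2 \<and> y \<in> calR_values t e1 e2}"
proof
  obtain p1 q1 p2 q2 i1 j1 where bez: "p1 * e1 + q1 * c1 = 1" "p2 * e2 + q2 * c2 = 1"
    and inv: "[e2 * i1 = 1] (mod c1)" "[c2 * j1 = 1] (mod e1)"
    by (rule crt_parameters)
  have "[e1 * p1 = 1] (mod c1)" "[c1 * q1 = 1] (mod e1)"
    using bezout_imp_cong[OF bez(1)] bezout_imp_cong[of q1 c1 p1 e1] bez(1)
    by (simp_all add: ac_simps)
  then have unit: "coprime p1 c1" "coprime i1 c1" "coprime q1 e1" "coprime j1 e1"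
    using inv by (metis coprime_iff_invertible_int mult.commute)+
  fix z assume "z \<in> calR_values t (c1 * e1) (c2 * e2)"
  then obtain a b where ab: "coprime (a * b) (c1 * e1)"
    "z = restricted_l1 (c1 * e1) (c2 * e2) a 1 (b * t)"
    by (auto simp: calR_values_def)
  have "restricted_l1 c1 c2 (a * p1) 1 ((i1 * b) * t) \<in> calR_values t c1 c2"
    using ab(1) unit by (auto simp: calR_values_def intro!: image_eqI[of _ _ "(a * p1, i1 * b)"])
  moreover have "restricted_l1 e1 e2 (a * q1) 1 ((j1 * b) * t) \<in> calR_values t e1 e2"
    using ab(1) unit by (auto simp: calR_values_def intro!: image_eqI[of _ _ "(a * q1, j1 * b)"])
  ultimately show "z \<in> {x * y | x y. x \<in> calR_values t c1 c2 \<and> y \<in> calR_values t e1 e2}"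
    using restricted_l1_crt_unit[OF bez inv, of a "b * t"] ab(2) by (auto simp: ac_simps)
qed

lemma calR_values_mult_supset:
  "{x * y | x y. x \<in> calR_values t c1 c2 \<and> y \<in> calR_values t e1 e2} \<subseteq>
    calR_values t (c1 * e1) (c2 * e2)"
proof
  obtain p1 q1 p2 q2 i1 j1 where bez: "p1 * e1 + q1 * c1 = 1" "p2 * e2 + q2 * c2 = 1"
    and inv: "[e2 * i1 = 1] (mod c1)" "[c2 * j1 = 1] (mod e1)"
    by (rule crt_parameters)
  have p1: "[e1 * p1 = 1] (mod c1)" and q1: "[c1 * q1 = 1] (mod e1)"
    using bezout_imp_cong[OF bez(1)] bezout_imp_cong[of q1 c1 p1 e1] bez(1)
    by (simp_all add: ac_simps)
  have unit_cong: "[x = y] (mod m)" if "[x = y * v] (mod m)" "[v = 1] (mod m)" for x y v m :: int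
    using that cong_scalar_left[OF that(2), of y] by (simp add: cong_trans)
  fix z assume "z \<in> {x * y | x y. x \<in> calR_values t c1 c2 \<and> y \<in> calR_values t e1 e2}"
  then obtain a1 b1 a2 b2 where ab: "coprime (a1 * b1) c1" "coprime (a2 * b2) e1"
    and z: "z = restricted_l1 c1 c2 a1 1 (b1 * t) * restricted_l1 e1 e2 a2 1 (b2 * t)"
    by (auto simp: calR_values_def)
  obtain a where a: "[a = a1 * e1] (mod c1)" "[a = a2 * c1] (mod e1)"
    using binary_chinese_remainder_int[OF coprime_crt_factors(1)] by blast
  obtain b where b: "[b = b1 * e2] (mod c1)" "[b = b2 * c2] (mod e1)"
    using binary_chinese_remainder_int[OF coprime_crt_factors(1)] by blast
  have "[a * p1 = a1 * (e1 * p1)] (mod c1)" "[i1 * (b * t) = (b1 * t) * (e2 * i1)] (mod c1)"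
    "[a * q1 = a2 * (c1 * q1)] (mod e1)" "[j1 * (b * t) = (b2 * t) * (c2 * j1)] (mod e1)"
    using cong_scalar_right[OF a(1), of p1] cong_scalar_right[OF b(1), of "i1 * t"]
      cong_scalar_right[OF a(2), of q1] cong_scalar_right[OF b(2), of "j1 * t"]
    by (simp_all add: ac_simps)
  then have "[a * p1 = a1] (mod c1)" "[i1 * (b * t) = b1 * t] (mod c1)"
    "[a * q1 = a2] (mod e1)" "[j1 * (b * t) = b2 * t] (mod e1)"
    using p1 q1 inv by (blast intro: unit_cong)+
  then have "restricted_l1 c1 c2 (a * p1) 1 (i1 * (b * t)) = restricted_l1 c1 c2 a1 1 (b1 * t)"
    "restricted_l1 e1 e2 (a * q1) 1 (j1 * (b * t)) = restricted_l1 e1 e2 a2 1 (b2 * t)"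
    by (simp_all add: restricted_l1_cong)
  then have "z = restricted_l1 (c1 * e1) (c2 * e2) a 1 (b * t)"
    using restricted_l1_crt_unit[OF bez inv, of a "b * t"] z by simp
  moreover have "coprime (a * b) (c1 * e1)"
    using ab a b coprime_crt_factors by (auto dest: cong_imp_coprime[OF cong_sym])
  ultimately show "z \<in> calR_values t (c1 * e1) (c2 * e2)" by (auto simp: calR_values_def)
qed

lemma calR_values_mult:
  "calR_values t (c1 * e1) (c2 * e2)
      = {x * y | x y. x \<in> calR_values t c1 c2 \<and> y \<in> calR_values t e1 e2}"
  using calR_values_mult_subset calR_values_mult_supset by (rule equalityI)

end

theorem lemma4:
  fixes t C1 C2 E1 E2 :: int
  assumes "C1 > 0" "C2 > 0" "E1 > 0" "E2 > 0"
    and "coprime (C1 * C2) (E1 * E2)"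
  shows "calR t (C1 * E1) (C2 * E2) = calR t C1 C2 * calR t E1 E2"
proof -
  have "calR t (C1 * E1) (C2 * E2) = Sup (calR_values t (C1 * E1) (C2 * E2))"
    using assms by (simp add: calR_eq_Sup_calR_values)
  also have "\<dots> = Sup {x * y | x y. x \<in> calR_values t C1 C2 \<and> y \<in> calR_values t E1 E2}"
    using assms by (simp add: calR_values_mult)
  also have "\<dots> = Sup (calR_values t C1 C2) * Sup (calR_values t E1 E2)"
    using assms by (intro Sup_times_nonneg finite_calR_values calR_values_nonempty
      calR_values_nonneg)
  also have "\<dots> = calR t C1 C2 * calR t E1 E2"
    using assms by (simp add: calR_eq_Sup_calR_values)
  finally show ?thesis .
qed

end
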